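(* Let $(k_{i,j})$ satisfy condition (K) and condition (KC). For $\varepsilon>0$ define $$k^\varepsilon(x,y)=\sum_{i=0}^\infty\sum_{j=0}^\infty\frac{k_{i,j}}{\varepsilon}\chi_{[i\varepsilon,(i+1)\varepsilon)}(x)\chi_{[j\varepsilon,(j+1)\varepsilon)}(y),\qquad x,y\ge 0.$$ Then there exist a sequence $\varepsilon_n\to 0$ and a family $(k(\cdot,y))_{y>0}$ of probability measures on $[0,\infty)$ such that: (1) $k(\cdot,y)$ is supported in $[0,y]$, is symmetric (its image under $x\mapsto y-x$ equals itself), and $2\int x\,k(dx,y)=y$; (2) $y\mapsto k(\cdot,y)$ is continuous from $(0,\infty)$ into the bounded Radon measures on $[0,\infty)$ with the weak-$\star$ topology; (3) for every $y>0$, the probability measures $k^{\varepsilon_n}(x,y)\,dx$ converge weakly (in law) to $k(\cdot,y)$; (4) for every $\varphi\in C_c^\infty((0,\infty))$, setting $\phi^{\varepsilon}(y)=\int_0^y k^{\varepsilon}(x,y)\varphi(x)\,dx$ and $\phi(y)=\int_{[0,y]}\varphi(x)\,k(dx,y)$, one has $\phi^{\varepsilon_n}\to\phi$ uniformly on $[0,R]$ for every $0<R<\infty$.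
   Context: Condition (K): $(k_{i,j})_{i,j\ge 0}$ are real numbers with $k_{i,j}\ge 0$, $k_{i,j}=0$ whenever $i\ge j$ or $i=0$, $k_{i,j}=k_{j-i,j}$ for $1\le i\le j-1$, and $\sum_{i=1}^{j-1}k_{i,j}=1$ for every $j\ge 2$. Condition (KC): there exists $K>0$ such that for all integers $i,j\ge 0$, $\Big|\sum_{p=0}^{i-1}\sum_{r=0}^{p-1}k_{r,j+1}-\sum_{p=0}^{i-1}\sum_{r=0}^{p-1}k_{r,j}\Big|\le K$. $\chi_A$ denotes the indicator function of $A$. *)

theory Defs
  imports "HOL-Probability.Probability"
begin

definition condK :: "(nat \<Rightarrow> nat \<Rightarrow> real) \<Rightarrow> bool" where
  "condK k \<longleftrightarrow>
     (\<forall>i j. 0 \<le> k i j) \<and>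
     (\<forall>i j. (j \<le> i \<or> i = 0) \<longrightarrow> k i j = 0) \<and>
     (\<forall>i j. 1 \<le> i \<and> i \<le> j - 1 \<longrightarrow> k i j = k (j - i) j) \<and>
     (\<forall>j\<ge>2. (\<Sum>i=1..j-1. k i j) = 1)"

definition condKC :: "(nat \<Rightarrow> nat \<Rightarrow> real) \<Rightarrow> bool" where
  "condKC k \<longleftrightarrow>
     (\<exists>K>0. \<forall>i j.
        \<bar>(\<Sum>p<i. \<Sum>r<p. k r (j+1)) - (\<Sum>p<i. \<Sum>r<p. k r j)\<bar> \<le> K)"

definition keps :: "(nat \<Rightarrow> nat \<Rightarrow> real) \<Rightarrow> real \<Rightarrow> real \<Rightarrow> real \<Rightarrow> real" where
  "keps k \<epsilon> x y =
     (if 0 \<le> x \<and> 0 \<le> y then k (nat \<lfloor>x / \<epsilon>\<rfloor>) (nat \<lfloor>y / \<epsilon>\<rfloor>) / \<epsilon> else 0)"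

definition keps_measure :: "(nat \<Rightarrow> nat \<Rightarrow> real) \<Rightarrow> real \<Rightarrow> real \<Rightarrow> real measure" where
  "keps_measure k \<epsilon> y = density lborel (\<lambda>x. ennreal (keps k \<epsilon> x y))"

text \<open>Test functions in C_c^\<infinity>((0,\<infinity>)): infinitely differentiable on the reals,
  vanishing outside a compact interval [a,b] with 0 < a.\<close>
definition smooth_fun :: "(real \<Rightarrow> real) \<Rightarrow> bool" where
  "smooth_fun \<phi> \<longleftrightarrow>
     (\<exists>D :: nat \<Rightarrow> real \<Rightarrow> real. D 0 = \<phi> \<and>
        (\<forall>m x. (D m has_real_derivative D (Suc m) x) (at x)))"

definition Cc_infty_pos :: "(real \<Rightarrow> real) \<Rightarrow> bool" where
  "Cc_infty_pos \<phi> \<longleftrightarrow> smooth_fun \<phi> \<and>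
     (\<exists>a b. 0 < a \<and> a \<le> b \<and> (\<forall>x. x \<notin> {a..b} \<longrightarrow> \<phi> x = 0))"

end

theory Submission
  imports Defs
begin

(* For a mesh e > 0 and a column index J, the measure with density k (floor (x/e)) J / e on [0,oo)
   is a probability measure on [0, J e] (J >= 2), symmetric under x |-> (J+1) e - x.  The kernel
   k^e(.,y) of the theorem is this measure for J = floor (y/e).
   The key quantity is the hinge moment  a |-> int (a - x)^+ d mu.  It is 1-Lipschitz in a, and at the
   grid points a = m e it equals e times the average of the two double partial sums occurring in
   condition (KC); hence (KC) makes it change by O(e) when J increases by one.  Consequently the
   hinge moments of k^e(.,y) are Lipschitz in (y,a) up to an error O(e).
   A diagonal argument yields a mesh sequence eps_n -> 0 along which the hinge moments converge at
   all rational points, hence (by the Lipschitz estimate) everywhere, uniformly enough to let y vary.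
   Differences of hinge moments are integrals of the piecewise linear functions cts_step, so for
   each y > 0 the limits determine a unique probability measure k(.,y) (Helly selection gives
   existence), and k^{eps_n}(.,y_n) converges weakly to k(.,y) whenever y_n -> y > 0.
   Properties (1)-(4) follow: support and symmetry pass to the limit, the mean follows from symmetry,
   continuity in y and uniform convergence on (0,R] follow from the sequential weak convergence. *)


subsection \<open>Diagonal subsequences\<close>

lemma diagonal_convergent_subsequence:
  fixes F :: "nat \<Rightarrow> nat \<Rightarrow> real"
  assumes bdd: "\<And>n. \<exists>B. \<forall>N. \<bar>F N n\<bar> \<le> B"
  shows "\<exists>d. strict_mono d \<and> (\<forall>n. convergent (\<lambda>N. F (d N) n))"
proof -
  let ?P = "\<lambda>n s. convergent (\<lambda>N. F (s N) n)"
  interpret nat: subseqs ?P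
  proof (unfold convergent_def, unfold subseqs_def, auto)
    fix n :: nat and s :: "nat \<Rightarrow> nat" assume s: "strict_mono s"
    obtain M where M: "\<And>N. \<bar>F N n\<bar> \<le> M" using bdd by blast
    have "\<And>N. F (s N) n \<in> {-M..M}"
      using M by (simp add: abs_le_iff minus_le_iff)
    then have "\<exists>l s'. strict_mono s' \<and> ((\<lambda>N. F (s N) n) \<circ> s') \<longlonglongrightarrow> l"
      using compact_Icc compact_imp_seq_compact seq_compactE by metis
    then show "\<exists>s'. strict_mono (s' :: nat \<Rightarrow> nat) \<and> (\<exists>l. (\<lambda>N. F (s (s' N)) n) \<longlonglongrightarrow> l)"
      by (auto simp: comp_def)
  qed
  have "?P n nat.diagseq" for n
  proof -
    have "(\<lambda>N. F ((nat.seqseq (Suc n) \<circ> (\<lambda>N. nat.fold_reduce (Suc n) N (Suc n + N))) N) n)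
        = (\<lambda>N. F (nat.seqseq (Suc n) N) n) \<circ> (\<lambda>N. nat.fold_reduce (Suc n) N (Suc n + N))"
      by auto
    then have "?P n (nat.diagseq \<circ> ((+) (Suc n)))"
      unfolding nat.diagseq_seqseq
      by (simp only:) (intro convergent_subseq_convergent nat.seqseq_holds nat.subseq_diagonal_rest)
    then obtain L where "(\<lambda>N. F (nat.diagseq (N + Suc n)) n) \<longlonglongrightarrow> L"
      by (auto simp: add.commute dest: convergentD)
    then have "(\<lambda>N. F (nat.diagseq N) n) \<longlonglongrightarrow> L" by (rule LIMSEQ_offset)
    then show ?thesis by (auto simp: convergent_def)
  qed
  then show ?thesis using nat.subseq_diagseq by blast
qed

lemma mesh_sequence_converging_on_rationals:
  fixes F :: "real \<Rightarrow> real \<Rightarrow> real \<Rightarrow> real"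
  assumes bdd: "\<And>e y a. 0 < e \<Longrightarrow> \<bar>F e y a\<bar> \<le> B y a"
  obtains eps :: "nat \<Rightarrow> real" where "\<And>n. 0 < eps n" "eps \<longlonglongrightarrow> 0"
    "\<And>q r. q \<in> \<rat> \<Longrightarrow> r \<in> \<rat> \<Longrightarrow> convergent (\<lambda>n. F (eps n) q r)"
proof -
  define P :: "nat \<Rightarrow> real \<times> real" where "P = from_nat_into (\<rat> \<times> \<rat>)"
  have P: "range P = \<rat> \<times> \<rat>"
    unfolding P_def by (rule range_from_nat_into) (auto simp: countable_rat)
  define G where "G N n = F (1 / (real N + 1)) (fst (P n)) (snd (P n))" for N n
  have "\<exists>B. \<forall>N. \<bar>G N n\<bar> \<le> B" for n
    unfolding G_def using bdd by (intro exI[of _ "B (fst (P n)) (snd (P n))"]) simp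
  then obtain d where d: "strict_mono d" "\<And>n. convergent (\<lambda>N. G (d N) n)"
    using diagonal_convergent_subsequence[of G] by blast
  define eps where "eps n = 1 / (real (d n) + 1)" for n
  have "0 < eps n" for n unfolding eps_def by simp
  moreover have "eps \<longlonglongrightarrow> 0"
  proof (rule tendsto_sandwich[of "\<lambda>n. 0" _ _ "\<lambda>n. 1 / real (Suc n)"])
    have "eps n \<le> 1 / real (Suc n)" for n
    proof -
      have "real (Suc n) \<le> real (d n) + 1" using seq_suble[OF d(1), of n] by simp
      then show ?thesis unfolding eps_def by (intro divide_left_mono) auto
    qed
    then show "\<forall>\<^sub>F n in sequentially. eps n \<le> 1 / real (Suc n)" by simp
    show "(\<lambda>n. 1 / real (Suc n)) \<longlonglongrightarrow> 0" using LIMSEQ_Suc[OF lim_inverse_n'] by simp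
  qed (auto simp: eps_def)
  moreover have "convergent (\<lambda>n. F (eps n) q r)" if "q \<in> \<rat>" "r \<in> \<rat>" for q r
  proof -
    have "(q, r) \<in> range P" using P that by simp
    then obtain n where "P n = (q, r)" by (metis rangeE)
    then show ?thesis using d(2)[of n] by (simp add: G_def eps_def)
  qed
  ultimately show ?thesis using that by blast
qed


subsection \<open>The test functions \<open>cts_step\<close>\<close>

text \<open>\<open>cts_step a b\<close> (from the weak convergence library) is the difference quotient of two
  hinge functions; this is how hinge moments control integrals of \<open>cts_step\<close>.\<close>
lemma cts_step_hinge: "a < b \<Longrightarrow> cts_step a b x = (max 0 (b - x) - max 0 (a - x)) / (b - a)"
  by (auto simp: cts_step_def field_simps)

lemma cts_step_reflect:
  assumes "a < b"
  shows "cts_step a b (c - x) = 1 - cts_step (c - b) (c - a) x"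
proof -
  consider "c - x \<le> a" | "b \<le> c - x" | "a < c - x" "c - x < b" by linarith
  then show ?thesis
  proof cases
    case 3
    then have "cts_step a b (c - x) = (b - (c - x)) / (b - a)"
      and "cts_step (c - b) (c - a) x = (c - a - x) / (b - a)"
      by (auto simp: cts_step_def)
    moreover have "(b - (c - x)) / (b - a) = 1 - (c - a - x) / (b - a)"
      using assms by (simp add: field_simps)
    ultimately show ?thesis by simp
  qed (use assms in \<open>auto simp: cts_step_def\<close>)
qed

lemma cts_step_abs:
  assumes "a < b" shows "\<bar>cts_step a b x\<bar> \<le> 1"
proof -
  have "0 \<le> cts_step a b x" "cts_step a b x \<le> 1"
    using assms by (auto simp: cts_step_def field_simps)
  then show ?thesis by linarith
qed

lemma cts_step_isCont:
  assumes "a < b" shows "isCont (cts_step a b) x"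
proof -
  have "continuous_on UNIV (cts_step a b)"
    by (rule uniformly_continuous_imp_continuous[OF cts_step_uniformly_continuous[OF assms]])
  then show ?thesis by (simp add: continuous_on_eq_continuous_at)
qed

lemma cts_step_measurable[measurable]: "cts_step a b \<in> borel_measurable borel"
  unfolding cts_step_def by measurable

text \<open>Shifting both break points by \<open>d\<close> moves \<open>cts_step\<close> uniformly by at most \<open>2 |d| / (b - a)\<close>;
  needed because the discrete kernels are symmetric about a point only \<open>\<epsilon>\<close>-close to \<open>y\<close>.\<close>
lemma cts_step_shift:
  assumes "a < b"
  shows "\<bar>cts_step (a + d) (b + d) x - cts_step a b x\<bar> \<le> 2 * \<bar>d\<bar> / (b - a)"
proof -
  have hinge_shift: "\<bar>max 0 (c + d - x) - max 0 (c - x)\<bar> \<le> \<bar>d\<bar>" for c :: real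
    by (cases "0 \<le> c + d - x"; cases "0 \<le> c - x") (simp_all add: max_def)
  have e1: "cts_step (a + d) (b + d) x = (max 0 (b + d - x) - max 0 (a + d - x)) / (b - a)"
    using cts_step_hinge[of "a + d" "b + d" x] assms by simp
  have e2: "cts_step a b x = (max 0 (b - x) - max 0 (a - x)) / (b - a)"
    using cts_step_hinge[of a b x] assms by simp
  have diff: "cts_step (a + d) (b + d) x - cts_step a b x =
     ((max 0 (b + d - x) - max 0 (b - x)) - (max 0 (a + d - x) - max 0 (a - x))) / (b - a)"
    unfolding e1 e2 by (simp add: diff_divide_distrib)
  have "\<bar>u - v\<bar> \<le> 2 * \<bar>d\<bar>" if "\<bar>u\<bar> \<le> \<bar>d\<bar>" "\<bar>v\<bar> \<le> \<bar>d\<bar>" for u v :: real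
    using that by linarith
  then have "\<bar>(max 0 (b + d - x) - max 0 (b - x)) - (max 0 (a + d - x) - max 0 (a - x))\<bar> \<le> 2 * \<bar>d\<bar>"
    using hinge_shift by blast
  with diff show ?thesis using assms by (simp add: abs_divide divide_right_mono)
qed


lemma (in real_distribution) cts_step_tendsto_cdf:
  "(\<lambda>n. integral\<^sup>L M (cts_step x (x + 1 / Suc n))) \<longlonglongrightarrow> cdf M x"
proof (rule tendsto_sandwich[of "\<lambda>n. cdf M x" _ _ "\<lambda>n. cdf M (x + 1 / Suc n)"])
  show "\<forall>\<^sub>F n in sequentially. cdf M x \<le> integral\<^sup>L M (cts_step x (x + 1 / Suc n))"
    "\<forall>\<^sub>F n in sequentially. integral\<^sup>L M (cts_step x (x + 1 / Suc n)) \<le> cdf M (x + 1 / Suc n)"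
    using cdf_cts_step by simp_all
  have lim: "(\<lambda>n. x + 1 / real (Suc n)) \<longlonglongrightarrow> x"
    using tendsto_add[OF tendsto_const LIMSEQ_Suc[OF lim_inverse_n']] by simp
  have "\<forall>s. (\<forall>n. s n \<in> {x<..}) \<and> s \<longlonglongrightarrow> x \<longrightarrow> (\<lambda>n. cdf M (s n)) \<longlonglongrightarrow> cdf M x"
    using cdf_is_right_cont[of x] unfolding continuous_within_sequentially comp_def by simp
  from this[rule_format, of "\<lambda>n. x + 1 / real (Suc n)"] lim
  show "(\<lambda>n. cdf M (x + 1 / real (Suc n))) \<longlonglongrightarrow> cdf M x" by simp
qed simp

lemma real_distribution_eqI_cts_step:
  assumes M1: "real_distribution M1" and M2: "real_distribution M2"
    and eq: "\<And>a b. a < b \<Longrightarrow> integral\<^sup>L M1 (cts_step a b) = integral\<^sup>L M2 (cts_step a b)"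
  shows "M1 = M2"
proof (rule cdf_unique[OF M1 M2], rule ext)
  fix x
  have "(\<lambda>n. integral\<^sup>L M2 (cts_step x (x + 1 / Suc n))) \<longlonglongrightarrow> cdf M1 x"
    using real_distribution.cts_step_tendsto_cdf[OF M1, of x] eq by simp
  then show "cdf M1 x = cdf M2 x"
    using LIMSEQ_unique real_distribution.cts_step_tendsto_cdf[OF M2] by blast
qed

lemma cts_step_conv_imp_integral_conv:
  fixes g :: "real \<Rightarrow> real"
  assumes nu: "\<forall>\<^sub>F m in sequentially. real_distribution (\<nu> m)" and N: "real_distribution N"
    and conv: "\<And>a b. a < b \<Longrightarrow> (\<lambda>m. integral\<^sup>L (\<nu> m) (cts_step a b)) \<longlonglongrightarrow> integral\<^sup>L N (cts_step a b)"
    and g: "\<And>x. isCont g x" "\<And>x. \<bar>g x\<bar> \<le> B"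
  shows "(\<lambda>m. integral\<^sup>L (\<nu> m) g) \<longlonglongrightarrow> integral\<^sup>L N g"
proof -
  obtain M where "\<forall>m\<ge>M. real_distribution (\<nu> m)"
    using nu by (auto simp: eventually_sequentially)
  then have nu': "\<And>m. real_distribution (\<nu> (m + M))" by simp
  have "weak_conv_m (\<lambda>m. \<nu> (m + M)) N"
    by (rule integral_cts_step_conv_imp_weak_conv[OF nu' N LIMSEQ_ignore_initial_segment[OF conv]])
  moreover have "\<And>x. norm (g x) \<le> B" using g(2) by simp
  ultimately have "(\<lambda>m. integral\<^sup>L (\<nu> (m + M)) g) \<longlonglongrightarrow> integral\<^sup>L N g"
    by (rule weak_conv_imp_integral_bdd_continuous_conv[OF nu' N _ g(1)])
  then show ?thesis by (rule LIMSEQ_offset)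
qed

text \<open>Test functions only defined on \<open>[0,\<infinity>)\<close>: for measures living on \<open>[0,\<infinity>)\<close>, convergence
  of integrals of globally continuous bounded functions yields convergence for every bounded
  function continuous on \<open>[0,\<infinity>)\<close> (extend it by \<open>f (max x 0)\<close>).\<close>
lemma integral_conv_on_nonneg:
  fixes f :: "real \<Rightarrow> real" and M :: "nat \<Rightarrow> real measure"
  assumes sets: "\<And>n. sets (M n) = sets borel" "sets N = sets borel"
    and AE: "\<And>n. AE x in M n. 0 \<le> x" "AE x in N. 0 \<le> x"
    and f: "continuous_on {0..} f" "bounded (f ` {0..})"
    and conv: "\<And>(g :: real \<Rightarrow> real) B. (\<And>x. isCont g x) \<Longrightarrow> (\<And>x. \<bar>g x\<bar> \<le> B) \<Longrightarrow>
      (\<lambda>n. integral\<^sup>L (M n) g) \<longlonglongrightarrow> integral\<^sup>L N g"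
  shows "(\<lambda>n. integral\<^sup>L (M n) f) \<longlonglongrightarrow> integral\<^sup>L N f"
proof (cases "f \<in> borel_measurable borel")
  case True
  define g where "g x = f (max x 0)" for x
  have g_cont: "continuous_on UNIV g"
    unfolding g_def by (rule continuous_on_compose2[OF f(1)]) (auto intro!: continuous_intros)
  obtain B where "\<forall>x\<in>f ` {0..}. norm x \<le> B" using f(2) by (auto simp: bounded_iff)
  then have "\<bar>g x\<bar> \<le> B" for x by (auto simp: g_def)
  then have lim: "(\<lambda>n. integral\<^sup>L (M n) g) \<longlonglongrightarrow> integral\<^sup>L N g"
    using g_cont by (intro conv[of g B]) (auto simp: continuous_on_eq_continuous_at)
  have g_meas: "g \<in> borel_measurable borel"
    by (rule borel_measurable_continuous_onI[OF g_cont])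
  have same: "integral\<^sup>L L f = integral\<^sup>L L g" if "sets L = sets borel" "AE x in L. 0 \<le> x" for L
    using that True g_meas
    by (intro integral_cong_AE) (auto simp: g_def measurable_cong_sets[OF that(1) refl] elim!: AE_mp)
  show ?thesis using lim same sets AE by simp
next
  case False
  then have "\<not> integrable L f" if "sets L = sets borel" for L :: "real measure"
    using borel_measurable_integrable measurable_cong_sets[OF that refl] by blast
  then show ?thesis using sets by (simp add: not_integrable_integral_eq)
qed

lemma C0_bounded:
  fixes f :: "real \<Rightarrow> real"
  assumes c: "continuous_on {0..} f" and t: "(f \<longlongrightarrow> 0) at_top"
  shows "bounded (f ` {0..})"
proof -
  obtain N where N: "\<And>x. N \<le> x \<Longrightarrow> \<bar>f x\<bar> < 1"
    using order_tendstoD(2)[OF tendsto_rabs[OF t], of 1] by (auto simp: eventually_at_top_linorder)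
  have "compact (f ` {0..max N 0})"
    by (rule compact_continuous_image[OF continuous_on_subset[OF c]]) auto
  then obtain B where B: "\<forall>x\<in>f ` {0..max N 0}. norm x \<le> B"
    using compact_imp_bounded bounded_iff by metis
  have "\<bar>f x\<bar> \<le> max B 1" if "0 \<le> x" for x
  proof (cases "x \<le> max N 0")
    case True
    then have "f x \<in> f ` {0..max N 0}" using that by auto
    then have "norm (f x) \<le> B" using B by blast
    then show ?thesis by simp
  next
    case False
    then have "\<bar>f x\<bar> < 1" by (intro N) simp
    then show ?thesis by simp
  qed
  then show ?thesis unfolding bounded_iff by (intro exI[of _ "max B 1"]) auto
qed


lemma convergent_from_rationals:
  fixes F :: "nat \<Rightarrow> real \<Rightarrow> real \<Rightarrow> real" and \<delta> :: "nat \<Rightarrow> real"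
  assumes est: "\<And>n y y' a a'. 0 \<le> y \<Longrightarrow> 0 \<le> y' \<Longrightarrow>
      \<bar>F n y a - F n y' a'\<bar> \<le> \<bar>a - a'\<bar> + C * (\<bar>y - y'\<bar> + \<delta> n)"
    and C: "0 \<le> C" and \<delta>: "\<delta> \<longlonglongrightarrow> 0"
    and rat: "\<And>q r. q \<in> \<rat> \<Longrightarrow> r \<in> \<rat> \<Longrightarrow> convergent (\<lambda>n. F n q r)"
    and y: "0 \<le> y"
  shows "convergent (\<lambda>n. F n y a)"
  unfolding Cauchy_convergent_iff[symmetric]
proof (rule CauchyI)
  fix \<epsilon> :: real assume \<epsilon>: "0 < \<epsilon>"
  define X where "X = 1 + 2 * C"
  define h where "h = \<epsilon> / 4 / X"
  have "0 < X" using C by (simp add: X_def)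
  then have h: "0 < h" "h * X = \<epsilon> / 4" unfolding h_def using \<epsilon> by auto
  obtain q where q: "q \<in> \<rat>" "y < q" "q < y + h" using Rats_dense_in_real[of y "y + h"] h by auto
  obtain r where r: "r \<in> \<rat>" "a < r" "r < a + h" using Rats_dense_in_real[of a "a + h"] h by auto
  obtain M1 where M1: "\<And>m n. M1 \<le> m \<Longrightarrow> M1 \<le> n \<Longrightarrow> \<bar>F m q r - F n q r\<bar> < \<epsilon> / 2"
    using CauchyD[OF convergent_Cauchy[OF rat[OF q(1) r(1)]], of "\<epsilon> / 2"] \<epsilon> by auto
  obtain M2 where M2: "\<And>n. M2 \<le> n \<Longrightarrow> \<delta> n < h"
    using order_tendstoD(2)[OF \<delta> h(1)] by (auto simp: eventually_sequentially)
  have close: "\<bar>F n y a - F n q r\<bar> \<le> \<epsilon> / 4" if "M2 \<le> n" for n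
  proof -
    have "\<bar>F n y a - F n q r\<bar> \<le> \<bar>a - r\<bar> + C * (\<bar>y - q\<bar> + \<delta> n)"
      using q y by (intro est) auto
    also have "\<dots> \<le> h + C * (h + h)"
      using q r M2[OF that] C by (intro add_mono mult_left_mono) auto
    also have "\<dots> = \<epsilon> / 4" using h(2) by (simp add: X_def algebra_simps)
    finally show ?thesis .
  qed
  show "\<exists>M. \<forall>m\<ge>M. \<forall>n\<ge>M. norm (F m y a - F n y a) < \<epsilon>"
  proof (intro exI[of _ "max M1 M2"] allI impI)
    fix m n assume "max M1 M2 \<le> m" "max M1 M2 \<le> n"
    then have "\<bar>F m q r - F n q r\<bar> < \<epsilon> / 2" "\<bar>F m y a - F m q r\<bar> \<le> \<epsilon> / 4"
      "\<bar>F n y a - F n q r\<bar> \<le> \<epsilon> / 4"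
      using M1 close by auto
    then show "norm (F m y a - F n y a) < \<epsilon>" unfolding real_norm_def by linarith
  qed
qed

lemma filterlim_sequentially_ge_id:
  "(\<And>m. m \<le> f m) \<Longrightarrow> filterlim (f :: nat \<Rightarrow> nat) sequentially sequentially"
  by (rule filterlim_at_top_mono[OF filterlim_ident]) (auto intro: always_eventually)

lemma uniform_limit_sequentially_compact:
  fixes f :: "nat \<Rightarrow> 'a::metric_space \<Rightarrow> 'b::metric_space"
  assumes C: "compact C" "S \<subseteq> C"
    and seq: "\<And>nn ys l. filterlim nn sequentially sequentially \<Longrightarrow> (\<And>m. ys m \<in> S) \<Longrightarrow>
      ys \<longlonglongrightarrow> l \<Longrightarrow> l \<in> C \<Longrightarrow> (\<lambda>m. dist (f (nn m) (ys m)) (g (ys m))) \<longlonglongrightarrow> 0"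
  shows "uniform_limit S f g sequentially"
proof (rule uniform_limitI, rule ccontr)
  fix \<epsilon> :: real assume \<epsilon>: "0 < \<epsilon>"
  assume "\<not> (\<forall>\<^sub>F n in sequentially. \<forall>y\<in>S. dist (f n y) (g y) < \<epsilon>)"
  then have "\<forall>N. \<exists>n\<ge>N. \<exists>y\<in>S. \<not> dist (f n y) (g y) < \<epsilon>"
    unfolding not_eventually frequently_sequentially by auto
  then obtain nn ys where nn: "\<And>N. N \<le> nn N" and ys: "\<And>N. ys N \<in> S"
    and bad: "\<And>N. \<epsilon> \<le> dist (f (nn N) (ys N)) (g (ys N))"
    by (metis not_less)
  obtain l r where l: "l \<in> C" and r: "strict_mono r" and lim: "(ys \<circ> r) \<longlonglongrightarrow> l"
    using seq_compactE[OF compact_imp_seq_compact[OF C(1)], of ys] ys C(2) by blast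
  have "filterlim (\<lambda>m. nn (r m)) sequentially sequentially"
    by (rule filterlim_sequentially_ge_id) (use nn seq_suble[OF r] in \<open>auto intro: order_trans\<close>)
  then have "(\<lambda>m. dist (f (nn (r m)) (ys (r m))) (g (ys (r m)))) \<longlonglongrightarrow> 0"
    using lim ys l by (intro seq) (auto simp: comp_def)
  then have "\<forall>\<^sub>F m in sequentially. dist (f (nn (r m)) (ys (r m))) (g (ys (r m))) < \<epsilon>"
    using order_tendstoD(2) \<epsilon> by fastforce
  then obtain m where "dist (f (nn (r m)) (ys (r m))) (g (ys (r m))) < \<epsilon>"
    by (auto simp: eventually_sequentially)
  then show False using bad[of "r m"] by simp
qed


lemma condK_nonneg: "condK k \<Longrightarrow> 0 \<le> k i J"
  unfolding condK_def by blast

lemma condK_zero_first: "condK k \<Longrightarrow> k 0 J = 0"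
  unfolding condK_def by blast

lemma condK_zero_above: "condK k \<Longrightarrow> J \<le> i \<Longrightarrow> k i J = 0"
  unfolding condK_def by blast

text \<open>Each coefficient is at most 1, since the columns are probability vectors.\<close>
lemma condK_le1: assumes K: "condK k" shows "k i J \<le> 1"
proof (cases "2 \<le> J \<and> 1 \<le> i \<and> i \<le> J - 1")
  case True
  have "k i J \<le> (\<Sum>i=1..J-1. k i J)"
    by (rule member_le_sum) (use True condK_nonneg[OF K] in auto)
  also have "\<dots> = 1" using K True unfolding condK_def by blast
  finally show ?thesis .
next
  case False
  then have "J \<le> i \<or> i = 0" by auto
  then show ?thesis using condK_zero_above[OF K] condK_zero_first[OF K] by auto
qed

text \<open>The symmetry \<open>k i J = k (J - i) J\<close> holds for all \<open>i \<le> J\<close>, the boundary cases being zero.\<close>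
lemma condK_sym: assumes "condK k" "i \<le> J" shows "k i J = k (J - i) J"
proof -
  consider "i = 0" | "i = J" | "1 \<le> i \<and> i \<le> J - 1" using assms(2) by linarith
  then show ?thesis
  proof cases
    case 1 then show ?thesis using condK_zero_first[OF assms(1)] condK_zero_above[OF assms(1)] by simp
  next
    case 2 then show ?thesis using condK_zero_first[OF assms(1)] condK_zero_above[OF assms(1)] by simp
  next
    case 3
    have "\<forall>i j. 1 \<le> i \<and> i \<le> j - 1 \<longrightarrow> k i j = k (j - i) j" using assms(1) unfolding condK_def by blast
    then show ?thesis using 3 by blast
  qed
qed

lemma condK_column_sum: assumes K: "condK k" shows "(\<Sum>i<J. k i J) = (if 2 \<le> J then 1 else 0)"
proof (cases "2 \<le> J")
  case True
  have "{..<J} = insert 0 {1..J-1}" using True by auto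
  then have "(\<Sum>i<J. k i J) = k 0 J + (\<Sum>i=1..J-1. k i J)" by simp
  moreover have "(\<Sum>i=1..J-1. k i J) = 1" using K True unfolding condK_def by blast
  moreover have "k 0 J = 0" using K unfolding condK_def by blast
  ultimately show ?thesis using True by simp
next
  case False
  then have "J = 0 \<or> J = 1" by auto
  then show ?thesis using condK_zero_above[OF K] condK_zero_first[OF K] by auto
qed

lemma sum_extend_zero:
  fixes f :: "nat \<Rightarrow> 'a::comm_monoid_add"
  assumes "J \<le> N" "\<And>i. J \<le> i \<Longrightarrow> i < N \<Longrightarrow> f i = 0"
  shows "(\<Sum>i<N. f i) = (\<Sum>i<J. f i)"
  by (rule sum.mono_neutral_right) (use assms in auto)


subsection \<open>The columns of the discretised kernel\<close>

definition col_density :: "(nat \<Rightarrow> nat \<Rightarrow> real) \<Rightarrow> real \<Rightarrow> nat \<Rightarrow> real \<Rightarrow> real" where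
  "col_density k e J x = (if 0 \<le> x then k (nat \<lfloor>x / e\<rfloor>) J / e else 0)"

definition col_measure :: "(nat \<Rightarrow> nat \<Rightarrow> real) \<Rightarrow> real \<Rightarrow> nat \<Rightarrow> real measure" where
  "col_measure k e J = density lborel (\<lambda>x. ennreal (col_density k e J x))"

abbreviation mesh_cell :: "real \<Rightarrow> nat \<Rightarrow> real set" where
  "mesh_cell e i \<equiv> {real i * e .. (real i + 1) * e}"

lemma col_density_measurable[measurable]: "col_density k e J \<in> borel_measurable borel"
  unfolding col_density_def by measurable

lemma col_density_nonneg: "condK k \<Longrightarrow> 0 < e \<Longrightarrow> 0 \<le> col_density k e J x"
  unfolding col_density_def condK_def by auto

lemma sets_col_measure[simp, measurable_cong]: "sets (col_measure k e J) = sets borel"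
  by (simp add: col_measure_def)

lemma space_col_measure[simp]: "space (col_measure k e J) = UNIV"
  by (simp add: col_measure_def)

lemma keps_measure_eq_col_measure: "0 \<le> y \<Longrightarrow> keps_measure k e y = col_measure k e (nat \<lfloor>y / e\<rfloor>)"
  unfolding keps_measure_def col_measure_def keps_def col_density_def by (auto intro!: arg_cong[where f="density lborel"])

lemma mesh_cell_iff:
  fixes e x :: real and i :: nat
  assumes e: "0 < e" and x: "0 \<le> x" and ng: "\<forall>m::nat. x \<noteq> real m * e"
  shows "(x \<in> mesh_cell e i) \<longleftrightarrow> i = nat \<lfloor>x / e\<rfloor>"
proof
  assume "x \<in> mesh_cell e i"
  then have 1: "real i \<le> x / e" "x / e \<le> real i + 1" using e by (auto simp: field_simps)
  have "x \<noteq> real (Suc i) * e" using ng by blast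
  then have "x / e \<noteq> real i + 1" using e by (auto simp: field_simps)
  with 1 have "x / e < real i + 1" by simp
  with 1 have "\<lfloor>x / e\<rfloor> = int i" by (simp add: floor_eq_iff)
  then show "i = nat \<lfloor>x / e\<rfloor>" by simp
next
  assume "i = nat \<lfloor>x / e\<rfloor>"
  moreover have "0 \<le> x / e" using e x by simp
  ultimately have "real i = of_int \<lfloor>x / e\<rfloor>" by simp
  then have "real i \<le> x / e" "x / e < real i + 1" by linarith+
  then show "x \<in> mesh_cell e i" using e by (auto simp: field_simps)
qed

lemma AE_off_mesh: "0 < e \<Longrightarrow> AE x in lborel. \<forall>m::nat. x \<noteq> real m * e"
proof -
  have "countable (range (\<lambda>m::nat. real m * e))" by simp
  then have "range (\<lambda>m::nat. real m * e) \<in> null_sets lborel"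
    by (rule countable_imp_null_set_lborel)
  then show ?thesis by (rule AE_I') auto
qed

lemma col_density_outside:
  assumes K: "condK k" and e: "0 < e" and x: "x < 0 \<or> real J * e < x"
  shows "col_density k e J x = 0"
proof (cases "x < 0")
  case True then show ?thesis by (simp add: col_density_def)
next
  case False
  then have "real J < x / e" using x e by (simp add: field_simps)
  then have "J \<le> nat \<lfloor>x / e\<rfloor>" by linarith
  then show ?thesis using K by (simp add: col_density_def condK_zero_above)
qed

lemma col_density_le: assumes K: "condK k" and e: "0 < e" shows "col_density k e J x \<le> 1 / e"
  using condK_le1[OF K] e by (auto simp: col_density_def divide_right_mono)

lemma col_density_cell_sum:
  assumes K: "condK k" and e: "0 < e"
  shows "AE x in lborel. col_density k e J x = (\<Sum>i<J. k i J / e * indicator (mesh_cell e i) x)"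
  using AE_off_mesh[OF e]
proof eventually_elim
  case (elim x)
  show ?case
  proof (cases "0 \<le> x")
    case False
    have "indicator (mesh_cell e i) x = (0::real)" for i
    proof -
      have "x < real i * e" using False e mult_nonneg_nonneg[of "real i" e] by linarith
      then show ?thesis by simp
    qed
    then show ?thesis using False by (simp add: col_density_def)
  next
    case True
    define i0 where "i0 = nat \<lfloor>x / e\<rfloor>"
    have ind: "indicator (mesh_cell e i) x = (if i = i0 then 1 else (0::real))" for i
      using mesh_cell_iff[OF e True elim, of i] unfolding i0_def by (auto simp: indicator_def)
    have "(\<Sum>i<J. k i J / e * indicator (mesh_cell e i) x) = (if i0 < J then k i0 J / e else 0)"
      by (simp add: ind sum.delta if_distrib[of "\<lambda>t. _ * t"] cong: if_cong)
    also have "\<dots> = col_density k e J x"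
      using True condK_zero_above[OF K, of J i0] unfolding col_density_def i0_def[symmetric] by auto
    finally show ?thesis by simp
  qed
qed

lemma integral_col_measure:
  fixes g :: "real \<Rightarrow> real"
  assumes K: "condK k" and e: "0 < e"
    and g[measurable]: "g \<in> borel_measurable borel"
    and B: "\<And>x. 0 \<le> x \<Longrightarrow> x \<le> real J * e \<Longrightarrow> \<bar>g x\<bar> \<le> B"
  shows "integral\<^sup>L (col_measure k e J) g =
     (\<Sum>i<J. k i J / e * integral\<^sup>L lborel (\<lambda>x. indicator (mesh_cell e i) x * g x))"
proof -
  have int: "integrable lborel (\<lambda>x. indicator (mesh_cell e i) x * g x)" if "i < J" for i
  proof (rule integrableI_bounded_set[where A="mesh_cell e i" and B=B])
    have "(real i + 1) * e \<le> real J * e" using that e by (intro mult_right_mono) auto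
    moreover have "0 \<le> real i * e" using e by simp
    ultimately show "AE x in lborel. x \<in> mesh_cell e i \<longrightarrow> norm (indicator (mesh_cell e i) x * g x) \<le> B"
      using B by (intro AE_I2) auto
  qed (auto simp: emeasure_lborel_Icc_eq)
  have "integral\<^sup>L (col_measure k e J) g = integral\<^sup>L lborel (\<lambda>x. col_density k e J x *\<^sub>R g x)"
    unfolding col_measure_def by (rule integral_density) (auto simp: col_density_nonneg[OF K e])
  also have "\<dots> = integral\<^sup>L lborel (\<lambda>x. \<Sum>i<J. k i J / e * (indicator (mesh_cell e i) x * g x))"
    using col_density_cell_sum[OF K e, of J]
    by (intro integral_cong_AE) (auto elim!: AE_mp simp: sum_distrib_right mult.assoc)
  also have "\<dots> = (\<Sum>i<J. k i J / e * integral\<^sup>L lborel (\<lambda>x. indicator (mesh_cell e i) x * g x))"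
    by (subst Bochner_Integration.integral_sum) (auto intro!: int)
  finally show ?thesis .
qed

lemma integrable_col_measure:
  fixes g :: "real \<Rightarrow> real"
  assumes K: "condK k" and e: "0 < e"
    and g[measurable]: "g \<in> borel_measurable borel"
    and B: "\<And>x. 0 \<le> x \<Longrightarrow> x \<le> real J * e \<Longrightarrow> \<bar>g x\<bar> \<le> B"
  shows "integrable (col_measure k e J) g"
  unfolding col_measure_def
proof (subst integrable_density)
  show "integrable lborel (\<lambda>x. col_density k e J x *\<^sub>R g x)"
  proof (rule integrableI_bounded_set[where A="{0..real J * e}" and B="B / e"])
    show "AE x in lborel. x \<in> {0..real J * e} \<longrightarrow> norm (col_density k e J x *\<^sub>R g x) \<le> B / e"
    proof (intro AE_I2 impI)
      fix x assume x: "x \<in> {0..real J * e}"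
      have "norm (col_density k e J x *\<^sub>R g x) = col_density k e J x * \<bar>g x\<bar>"
        using col_density_nonneg[OF K e] by (simp add: abs_mult)
      also have "\<dots> \<le> (1 / e) * B"
        using x B[of x] col_density_le[OF K e] col_density_nonneg[OF K e] e
        by (intro mult_mono) auto
      finally show "norm (col_density k e J x *\<^sub>R g x) \<le> B / e" by simp
    qed
    show "AE x in lborel. x \<notin> {0..real J * e} \<longrightarrow> col_density k e J x *\<^sub>R g x = 0"
      using col_density_outside[OF K e] by auto
  qed (auto simp: emeasure_lborel_Icc_eq)
qed (auto simp: col_density_nonneg[OF K e])

lemma AE_col_measure: assumes K: "condK k" and e: "0 < e"
  shows "AE x in col_measure k e J. 0 \<le> x \<and> x \<le> real J * e"
  unfolding col_measure_def
proof (subst AE_density, simp, intro AE_I2 impI)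
  fix x assume "0 < ennreal (col_density k e J x)"
  then have "col_density k e J x \<noteq> 0" by auto
  then show "0 \<le> x \<and> x \<le> real J * e" using col_density_outside[OF K e, of x J] by linarith
qed

lemma emeasure_col_measure: assumes K: "condK k" and e: "0 < e"
  shows "emeasure (col_measure k e J) UNIV = ennreal (\<Sum>i<J. k i J)"
proof -
  have int1: "integrable (col_measure k e J) (\<lambda>_. 1::real)"
    by (rule integrable_col_measure[OF K e, where B=1]) auto
  then have int2: "integrable lborel (\<lambda>x. col_density k e J x *\<^sub>R (1::real))"
    unfolding col_measure_def by (subst (asm) integrable_density) (auto simp: col_density_nonneg[OF K e])
  have "emeasure (col_measure k e J) UNIV = (\<integral>\<^sup>+ x. ennreal (col_density k e J x) \<partial>lborel)"
    unfolding col_measure_def by (subst emeasure_density) auto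
  also have "\<dots> = ennreal (integral\<^sup>L lborel (col_density k e J))"
    using int2 by (intro nn_integral_eq_integral) (auto simp: col_density_nonneg[OF K e])
  also have "integral\<^sup>L lborel (col_density k e J) = integral\<^sup>L (col_measure k e J) (\<lambda>_. 1::real)"
    unfolding col_measure_def by (subst integral_density) (auto simp: col_density_nonneg[OF K e])
  also have "\<dots> = (\<Sum>i<J. k i J / e * integral\<^sup>L lborel (\<lambda>x. indicator (mesh_cell e i) x * (1::real)))"
    by (rule integral_col_measure[OF K e, where B=1]) auto
  also have "\<dots> = (\<Sum>i<J. k i J)"
  proof (rule sum.cong)
    fix i assume "i \<in> {..<J}"
    have "real i * e \<le> (real i + 1) * e" using e by (simp add: field_simps)
    then show "k i J / e * integral\<^sup>L lborel (\<lambda>x. indicator (mesh_cell e i) x * (1::real)) = k i J"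
      using e by (simp add: measure_lborel_Icc field_simps)
  qed simp
  finally show ?thesis .
qed

lemma finite_measure_col_measure: assumes K: "condK k" and e: "0 < e" shows "finite_measure (col_measure k e J)"
  by (rule finite_measureI) (simp add: emeasure_col_measure[OF K e])

lemma measure_col_measure: assumes K: "condK k" and e: "0 < e"
  shows "measure (col_measure k e J) UNIV = (if 2 \<le> J then 1 else 0)"
  using emeasure_col_measure[OF K e, of J] condK_column_sum[OF K, of J]
  by (simp add: measure_def)

lemma prob_space_col_measure: assumes K: "condK k" and e: "0 < e" and J: "2 \<le> J"
  shows "prob_space (col_measure k e J)"
  by (rule prob_spaceI) (simp add: emeasure_col_measure[OF K e] condK_column_sum[OF K] J)

lemma real_distribution_col_measure: assumes K: "condK k" and e: "0 < e" and J: "2 \<le> J"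
  shows "real_distribution (col_measure k e J)"
proof -
  interpret prob_space "col_measure k e J" by (rule prob_space_col_measure[OF K e J])
  show ?thesis by unfold_locales simp
qed

lemma mesh_cell_reflect:
  fixes e :: real and i J :: nat
  assumes e: "0 < e" and iJ: "i \<le> J"
  shows "indicator (mesh_cell e (J - i)) (real (Suc J) * e - x)
       = (indicator (mesh_cell e i) x :: real)"
proof -
  have r: "real (J - i) = real J - real i" using iJ by simp
  have "(real (Suc J) * e - x \<in> mesh_cell e (J - i)) \<longleftrightarrow>
        (x \<in> mesh_cell e i)"
    unfolding r by (auto simp: algebra_simps)
  then show ?thesis by (simp add: indicator_def)
qed

text \<open>Column \<open>J\<close> is invariant under the reflection \<open>x \<mapsto> (J + 1) e - x\<close>: the discrete form of
  the symmetry of the kernel, coming from \<open>k i J = k (J - i) J\<close>.\<close>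
lemma col_measure_reflect:
  fixes g :: "real \<Rightarrow> real"
  assumes K: "condK k" and e: "0 < e" and g[measurable]: "g \<in> borel_measurable borel"
    and B: "\<And>x. \<bar>g x\<bar> \<le> B"
  shows "integral\<^sup>L (col_measure k e J) (\<lambda>x. g (real (Suc J) * e - x)) = integral\<^sup>L (col_measure k e J) g"
proof -
  define c where "c = real (Suc J) * e"
  define F where "F m = integral\<^sup>L lborel (\<lambda>x. indicator (mesh_cell e m) x * g x)" for m :: nat
  have cell: "integral\<^sup>L lborel (\<lambda>x. indicator (mesh_cell e i) x * g (c - x)) = F (J - i)"
    if "i \<le> J" for i
  proof -
    have "F (J - i) = \<bar>- 1\<bar> *\<^sub>R integral\<^sup>L lborel (\<lambda>x. indicator (mesh_cell e (J - i)) (c + (- 1) * x) * g (c + (- 1) * x))"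
      unfolding F_def by (rule lborel_integral_real_affine) simp
    also have "\<dots> = integral\<^sup>L lborel (\<lambda>x. indicator (mesh_cell e i) x * g (c - x))"
      using mesh_cell_reflect[OF e that] unfolding c_def by simp
    finally show ?thesis by simp
  qed
  have L: "integral\<^sup>L (col_measure k e J) (\<lambda>x. g (c - x)) =
      (\<Sum>i<J. k i J / e * integral\<^sup>L lborel (\<lambda>x. indicator (mesh_cell e i) x * g (c - x)))"
    by (rule integral_col_measure[OF K e, where B=B]) (auto simp: B)
  also have "\<dots> = (\<Sum>i<J. k i J / e * F (J - i))"
    by (intro sum.cong refl) (simp add: cell)
  also have "\<dots> = (\<Sum>i<Suc J. k i J / e * F (J - i))"
    by (rule sum_extend_zero[symmetric]) (auto simp: condK_zero_above[OF K])
  also have "\<dots> = (\<Sum>i<Suc J. k (J - i) J / e * F (J - i))"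
  proof (rule sum.cong[OF refl])
    fix i assume "i \<in> {..<Suc J}"
    then have "i \<le> J" by simp
    from condK_sym[OF K this] show "k i J / e * F (J - i) = k (J - i) J / e * F (J - i)" by (rule arg_cong)
  qed
  also have "\<dots> = (\<Sum>i<Suc J. k i J / e * F i)"
    using sum.nat_diff_reindex[of "\<lambda>i. k i J / e * F i" "Suc J"] by simp
  also have "\<dots> = (\<Sum>i<J. k i J / e * F i)"
    by (rule sum_extend_zero) (auto simp: condK_zero_above[OF K])
  also have "\<dots> = integral\<^sup>L (col_measure k e J) g"
    unfolding F_def by (rule integral_col_measure[OF K e, where B=B, symmetric]) (auto simp: B)
  finally show ?thesis unfolding c_def .
qed


subsection \<open>Hinge moments\<close>

lemma integral_hinge_cell:
  assumes e: "0 < e"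
  shows "integral\<^sup>L lborel (\<lambda>x. indicator (mesh_cell e i) x * max 0 (real m * e - x))
     = (if i < m then e\<^sup>2 * (real m - real i - 1/2) else 0)"
proof (cases "i < m")
  case True
  have le: "real i * e \<le> (real i + 1) * e" using e by (simp add: field_simps)
  have "real i + 1 \<le> real m" using True by linarith
  then have le2: "(real i + 1) * e \<le> real m * e" using e by (intro mult_right_mono) auto
  have "integral\<^sup>L lborel (\<lambda>x. indicator (mesh_cell e i) x * max 0 (real m * e - x))
      = integral\<^sup>L lborel (\<lambda>x. indicator (mesh_cell e i) x *\<^sub>R (real m * e - x))"
    using le2 by (intro Bochner_Integration.integral_cong) (auto simp: indicator_def)
  also have "\<dots> = (real m * e * ((real i + 1) * e) - ((real i + 1) * e)\<^sup>2 / 2)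
      - (real m * e * (real i * e) - (real i * e)\<^sup>2 / 2)"
    by (rule integral_FTC_atLeastAtMost[OF le])
       (auto intro!: derivative_eq_intros continuous_intros simp: has_real_derivative_iff_has_vector_derivative[symmetric])
  also have "\<dots> = e\<^sup>2 * (real m - real i - 1/2)"
    by (simp add: power2_eq_square algebra_simps)
  finally show ?thesis using True by simp
next
  case False
  have "indicator (mesh_cell e i) x * max 0 (real m * e - x) = 0" for x
  proof -
    have "real m * e \<le> real i * e" using False e by (intro mult_right_mono) auto
    then show ?thesis by (auto simp: indicator_def)
  qed
  then have "(\<lambda>x. indicator (mesh_cell e i) x * max 0 (real m * e - x)) = (\<lambda>x. 0::real)"
    by (intro ext)
  then show ?thesis using False by simp
qed

text \<open>The hinge moment \<open>a \<mapsto> \<integral> (a - x)\<^sup>+ d\<mu>\<close> of a column; it determines the column's distribution function.\<close>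
definition hinge_moment :: "(nat \<Rightarrow> nat \<Rightarrow> real) \<Rightarrow> real \<Rightarrow> nat \<Rightarrow> real \<Rightarrow> real" where
  "hinge_moment k e J a = integral\<^sup>L (col_measure k e J) (\<lambda>x. max 0 (a - x))"

text \<open>The double partial sums occurring in condition (KC).\<close>
definition kc_sum :: "(nat \<Rightarrow> nat \<Rightarrow> real) \<Rightarrow> nat \<Rightarrow> nat \<Rightarrow> real" where
  "kc_sum k J m = (\<Sum>p<m. \<Sum>r<p. k r J)"

lemma kc_bound_nonneg:
  assumes "\<And>J m. \<bar>kc_sum k (Suc J) m - kc_sum k J m\<bar> \<le> KK"
  shows "0 \<le> KK"
  using assms[of 0 0] by (simp add: kc_sum_def)

text \<open>The hinge moment of column \<open>J\<close> at the mesh point \<open>m e\<close>, divided by \<open>e\<close>.\<close>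
definition grid_hinge :: "(nat \<Rightarrow> nat \<Rightarrow> real) \<Rightarrow> nat \<Rightarrow> nat \<Rightarrow> real" where
  "grid_hinge k J m = (\<Sum>i<m. k i J * (real m - real i - 1/2))"

text \<open>Summation by parts: the grid hinge moment is the mean of two consecutive double sums of (KC).\<close>
lemma grid_hinge_kc_sum: "grid_hinge k J m = (kc_sum k J m + kc_sum k J (Suc m)) / 2"
proof (induction m)
  case 0 then show ?case by (simp add: grid_hinge_def kc_sum_def)
next
  case (Suc m)
  have "(\<Sum>i<m. k i J * (real (Suc m) - real i - 1/2)) = (\<Sum>i<m. k i J * (real m - real i - 1/2)) + (\<Sum>i<m. k i J)"
    by (subst sum.distrib[symmetric]) (rule sum.cong, auto simp: algebra_simps)
  moreover have "k m J * (real (Suc m) - real m - 1/2) = k m J / 2" by simp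
  ultimately have "grid_hinge k J (Suc m) = grid_hinge k J m + (\<Sum>i<m. k i J) + k m J / 2"
    unfolding grid_hinge_def by simp
  also have "\<dots> = (kc_sum k J (Suc m) + kc_sum k J (Suc (Suc m))) / 2"
    unfolding Suc kc_sum_def by simp
  finally show ?case .
qed

lemma hinge_moment_grid:
  assumes K: "condK k" and e: "0 < e"
  shows "hinge_moment k e J (real m * e) = e * grid_hinge k J m"
proof -
  have "hinge_moment k e J (real m * e) = (\<Sum>i<J. k i J / e * integral\<^sup>L lborel
      (\<lambda>x. indicator (mesh_cell e i) x * max 0 (real m * e - x)))"
    unfolding hinge_moment_def
    by (rule integral_col_measure[OF K e, where B="real m * e"]) (use e in auto)
  also have "\<dots> = (\<Sum>i<J. e * (if i < m then k i J * (real m - real i - 1/2) else 0))"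
    using e by (intro sum.cong) (auto simp: integral_hinge_cell power2_eq_square)
  also have "\<dots> = e * (\<Sum>i<J + m. (if i < m then k i J * (real m - real i - 1/2) else 0))"
    by (subst sum_extend_zero[of J "J + m"]) (auto simp: sum_distrib_left condK_zero_above[OF K])
  also have "(\<Sum>i<J + m. (if i < m then k i J * (real m - real i - 1/2) else 0)) = grid_hinge k J m"
    unfolding grid_hinge_def
    by (subst sum_extend_zero[of m "J + m"]) auto
  finally show ?thesis .
qed

text \<open>Hinge moments are 1-Lipschitz in the hinge point, the column having mass at most 1.\<close>
lemma hinge_moment_lipschitz:
  assumes K: "condK k" and e: "0 < e"
  shows "\<bar>hinge_moment k e J a - hinge_moment k e J b\<bar> \<le> \<bar>a - b\<bar>"
proof -
  interpret finite_measure "col_measure k e J" by (rule finite_measure_col_measure[OF K e])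
  have int: "integrable (col_measure k e J) (\<lambda>x. max 0 (c - x))" for c
    by (rule integrable_col_measure[OF K e, where B="\<bar>c\<bar>"]) auto
  have "hinge_moment k e J a - hinge_moment k e J b = integral\<^sup>L (col_measure k e J) (\<lambda>x. max 0 (a - x) - max 0 (b - x))"
    unfolding hinge_moment_def by (rule Bochner_Integration.integral_diff[symmetric]) (auto intro: int)
  also have "\<bar>\<dots>\<bar> \<le> integral\<^sup>L (col_measure k e J) (\<lambda>x. \<bar>a - b\<bar>)"
    by (rule integral_abs_bound_integral) (auto intro!: Bochner_Integration.integrable_diff int)
  also have "\<dots> = measure (col_measure k e J) UNIV * \<bar>a - b\<bar>" by simp
  also have "\<dots> \<le> \<bar>a - b\<bar>"
    using measure_col_measure[OF K e, of J] by auto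
  finally show ?thesis .
qed

lemma hinge_moment_nonpos:
  assumes K: "condK k" and e: "0 < e" and a: "a \<le> 0"
  shows "hinge_moment k e J a = 0"
  unfolding hinge_moment_def
  by (rule integral_eq_zero_AE) (use AE_col_measure[OF K e, of J] a in \<open>auto elim!: AE_mp\<close>)

lemma grid_hinge_step:
  assumes KC: "\<And>J m. \<bar>kc_sum k (Suc J) m - kc_sum k J m\<bar> \<le> KK"
  shows "\<bar>grid_hinge k (Suc J) m - grid_hinge k J m\<bar> \<le> KK"
proof -
  have "grid_hinge k (Suc J) m - grid_hinge k J m = ((kc_sum k (Suc J) m - kc_sum k J m) + (kc_sum k (Suc J) (Suc m) - kc_sum k J (Suc m))) / 2"
    unfolding grid_hinge_kc_sum by (simp add: field_simps)
  then show ?thesis using KC[of J m] KC[of J "Suc m"] by simp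
qed

lemma hinge_moment_step:
  assumes K: "condK k" and e: "0 < e"
    and KC: "\<And>J m. \<bar>kc_sum k (Suc J) m - kc_sum k J m\<bar> \<le> KK"
  shows "\<bar>hinge_moment k e J a - hinge_moment k e (Suc J) a\<bar> \<le> (KK + 2) * e"
proof (cases "a \<le> 0")
  case True
  then show ?thesis using hinge_moment_nonpos[OF K e True] e kc_bound_nonneg[OF KC] by simp
next
  case False
  define m where "m = nat \<lfloor>a / e\<rfloor>"
  have "real m = of_int \<lfloor>a / e\<rfloor>" using False e unfolding m_def by simp
  then have "real m \<le> a / e" "a / e < real m + 1" by linarith+
  then have am: "\<bar>a - real m * e\<bar> \<le> e" using e by (auto simp: field_simps)
  have "\<bar>hinge_moment k e J a - hinge_moment k e (Suc J) a\<bar> \<le> \<bar>hinge_moment k e J a - hinge_moment k e J (real m * e)\<bar>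
      + \<bar>hinge_moment k e J (real m * e) - hinge_moment k e (Suc J) (real m * e)\<bar>
      + \<bar>hinge_moment k e (Suc J) (real m * e) - hinge_moment k e (Suc J) a\<bar>" by linarith
  also have "\<dots> \<le> e + KK * e + e"
  proof (intro add_mono)
    show "\<bar>hinge_moment k e J a - hinge_moment k e J (real m * e)\<bar> \<le> e"
      using hinge_moment_lipschitz[OF K e, of J a "real m * e"] am by linarith
    show "\<bar>hinge_moment k e (Suc J) (real m * e) - hinge_moment k e (Suc J) a\<bar> \<le> e"
      using hinge_moment_lipschitz[OF K e, of "Suc J" "real m * e" a] am by linarith
    have "\<bar>hinge_moment k e J (real m * e) - hinge_moment k e (Suc J) (real m * e)\<bar> = e * \<bar>grid_hinge k (Suc J) m - grid_hinge k J m\<bar>"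
      using e by (simp add: hinge_moment_grid[OF K e] abs_mult flip: right_diff_distrib abs_minus_commute)
    also have "\<dots> \<le> e * KK" using grid_hinge_step[OF KC] e by (intro mult_left_mono) auto
    finally show "\<bar>hinge_moment k e J (real m * e) - hinge_moment k e (Suc J) (real m * e)\<bar> \<le> KK * e" by (simp only: mult.commute)
  qed
  also have "e + KK * e + e = (KK + 2) * e" by (simp add: algebra_simps)
  finally show ?thesis .
qed

lemma hinge_moment_steps:
  assumes K: "condK k" and e: "0 < e"
    and KC: "\<And>J m. \<bar>kc_sum k (Suc J) m - kc_sum k J m\<bar> \<le> KK"
    and J: "J \<le> J'"
  shows "\<bar>hinge_moment k e J a - hinge_moment k e J' a\<bar> \<le> (KK + 2) * e * (real J' - real J)"
  using J
proof (induction J' rule: dec_induct)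
  case base then show ?case by simp
next
  case (step n)
  have "\<bar>hinge_moment k e J a - hinge_moment k e (Suc n) a\<bar> \<le> \<bar>hinge_moment k e J a - hinge_moment k e n a\<bar> + \<bar>hinge_moment k e n a - hinge_moment k e (Suc n) a\<bar>"
    by linarith
  also have "\<dots> \<le> (KK + 2) * e * (real n - real J) + (KK + 2) * e"
    using step.IH hinge_moment_step[OF K e KC, of n a] by linarith
  also have "(KK + 2) * e * (real n - real J) + (KK + 2) * e = (KK + 2) * e * (real (Suc n) - real J)"
    by (simp add: algebra_simps)
  finally show ?case .
qed


definition hinge_eps :: "(nat \<Rightarrow> nat \<Rightarrow> real) \<Rightarrow> real \<Rightarrow> real \<Rightarrow> real \<Rightarrow> real" where
  "hinge_eps k e y a = hinge_moment k e (nat \<lfloor>y / e\<rfloor>) a"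

lemma mesh_index_diff:
  assumes e: "0 < e" and y: "0 \<le> y" "0 \<le> y'"
  shows "e * \<bar>real (nat \<lfloor>y / e\<rfloor>) - real (nat \<lfloor>y' / e\<rfloor>)\<bar> \<le> \<bar>y - y'\<bar> + e"
proof -
  have 1: "real (nat \<lfloor>y / e\<rfloor>) = of_int \<lfloor>y / e\<rfloor>" "real (nat \<lfloor>y' / e\<rfloor>) = of_int \<lfloor>y' / e\<rfloor>"
    using e y by auto
  have "\<bar>of_int \<lfloor>y / e\<rfloor> - of_int \<lfloor>y' / e\<rfloor>\<bar> \<le> \<bar>y / e - y' / e\<bar> + (1::real)"
    by linarith
  then have "e * \<bar>of_int \<lfloor>y / e\<rfloor> - of_int \<lfloor>y' / e\<rfloor>\<bar> \<le> e * (\<bar>y / e - y' / e\<bar> + 1)"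
    using e by (intro mult_left_mono) auto
  also have "e * (\<bar>y / e - y' / e\<bar> + 1) = \<bar>y - y'\<bar> + e"
  proof -
    have "y / e - y' / e = (y - y') / e" by (simp add: diff_divide_distrib)
    then have "e * \<bar>y / e - y' / e\<bar> = \<bar>y - y'\<bar>" using e by (simp add: abs_divide)
    then show ?thesis by (simp add: distrib_left)
  qed
  finally show ?thesis unfolding 1 .
qed

lemma hinge_moment_bound:
  assumes K: "condK k" and e: "0 < e"
    and KC: "\<And>J m. \<bar>kc_sum k (Suc J) m - kc_sum k J m\<bar> \<le> KK"
  shows "\<bar>hinge_moment k e J a - hinge_moment k e J' a'\<bar> \<le> \<bar>a - a'\<bar> + (KK + 2) * e * \<bar>real J - real J'\<bar>"
proof -
  have *: "\<bar>hinge_moment k e J a' - hinge_moment k e J' a'\<bar> \<le> (KK + 2) * e * \<bar>real J - real J'\<bar>"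
  proof (cases "J \<le> J'")
    case True then show ?thesis using hinge_moment_steps[OF K e KC True, of a'] by simp
  next
    case False then have "J' \<le> J" by simp
    then show ?thesis using hinge_moment_steps[OF K e KC, of J' J a'] by simp
  qed
  show ?thesis using * hinge_moment_lipschitz[OF K e, of J a a'] by linarith
qed

lemma hinge_eps_bound:
  assumes K: "condK k" and e: "0 < e" and y: "0 \<le> y" "0 \<le> y'"
    and KC: "\<And>J m. \<bar>kc_sum k (Suc J) m - kc_sum k J m\<bar> \<le> KK"
  shows "\<bar>hinge_eps k e y a - hinge_eps k e y' a'\<bar> \<le> \<bar>a - a'\<bar> + (KK + 2) * (\<bar>y - y'\<bar> + e)"
proof -
  have "\<bar>hinge_eps k e y a - hinge_eps k e y' a'\<bar> \<le> \<bar>a - a'\<bar> + (KK + 2) * (e * \<bar>real (nat \<lfloor>y / e\<rfloor>) - real (nat \<lfloor>y' / e\<rfloor>)\<bar>)"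
    unfolding hinge_eps_def using hinge_moment_bound[OF K e KC] by (simp add: mult.assoc)
  also have "\<dots> \<le> \<bar>a - a'\<bar> + (KK + 2) * (\<bar>y - y'\<bar> + e)"
    using mesh_index_diff[OF e y] kc_bound_nonneg[OF KC] by (intro add_left_mono mult_left_mono) auto
  finally show ?thesis .
qed

lemma hinge_eps_abs:
  assumes K: "condK k" and e: "0 < e"
  shows "\<bar>hinge_eps k e y a\<bar> \<le> \<bar>a\<bar>"
  using hinge_moment_lipschitz[OF K e, of "nat \<lfloor>y / e\<rfloor>" a 0] hinge_moment_nonpos[OF K e, of 0] unfolding hinge_eps_def by simp


lemma Cc_infty_pos_isCont:
  assumes "Cc_infty_pos \<phi>" shows "isCont \<phi> x"
proof -
  obtain D where "D 0 = \<phi>" "\<And>m x. (D m has_real_derivative D (Suc m) x) (at x)"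
    using assms unfolding Cc_infty_pos_def smooth_fun_def by blast
  then show ?thesis using DERIV_isCont by metis
qed

lemma Cc_infty_pos_bounded:
  assumes C: "Cc_infty_pos \<phi>"
  obtains B where "\<And>x. \<bar>\<phi> x\<bar> \<le> B"
proof -
  obtain a b where ab: "\<And>x. x \<notin> {a..b} \<Longrightarrow> \<phi> x = 0"
    using C unfolding Cc_infty_pos_def by blast
  have "continuous_on {a..b} \<phi>"
    using Cc_infty_pos_isCont[OF C] by (simp add: continuous_at_imp_continuous_on)
  then have "compact (\<phi> ` {a..b})" by (rule compact_continuous_image[OF _ compact_Icc])
  then obtain B where B: "\<forall>x\<in>\<phi> ` {a..b}. norm x \<le> B"
    using compact_imp_bounded bounded_iff by metis
  have "\<bar>\<phi> x\<bar> \<le> max B 0" for x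
    using B ab[of x] by (cases "x \<in> {a..b}") (auto simp: le_max_iff_disj)
  then show ?thesis using that by blast
qed

lemma Cc_infty_pos_vanishes_near_0:
  assumes "Cc_infty_pos \<phi>"
  obtains a where "0 < a" "\<And>x. x < a \<Longrightarrow> \<phi> x = 0"
  using assms unfolding Cc_infty_pos_def by (meson atLeastAtMost_iff not_le)


subsection \<open>The limit kernel along a mesh sequence\<close>

text \<open>Throughout, \<open>eps\<close> is a mesh sequence tending to 0 along which the hinge moments converge at
  all rational points; such a sequence is produced at the very end by the diagonal argument.\<close>
context
  fixes k :: "nat \<Rightarrow> nat \<Rightarrow> real" and KK :: real and eps :: "nat \<Rightarrow> real"
  assumes K: "condK k"
    and KC: "\<And>J m. \<bar>kc_sum k (Suc J) m - kc_sum k J m\<bar> \<le> KK"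
    and eps_pos: "\<And>n. 0 < eps n" and eps_lim: "eps \<longlonglongrightarrow> 0"
    and rat_conv: "\<And>q r. q \<in> \<rat> \<Longrightarrow> r \<in> \<rat> \<Longrightarrow> convergent (\<lambda>n. hinge_eps k (eps n) q r)"
begin

lemma KK_nonneg: "0 \<le> KK"
  by (rule kc_bound_nonneg[OF KC])

lemma hinge_eps_estimate: "0 \<le> y \<Longrightarrow> 0 \<le> y' \<Longrightarrow>
  \<bar>hinge_eps k (eps n) y a - hinge_eps k (eps n) y' a'\<bar> \<le> \<bar>a - a'\<bar> + (KK + 2) * (\<bar>y - y'\<bar> + eps n)"
  by (rule hinge_eps_bound[OF K eps_pos _ _ KC])

lemma hinge_eps_convergent:
  assumes y: "0 \<le> y" shows "convergent (\<lambda>n. hinge_eps k (eps n) y a)"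
  using KK_nonneg
  by (intro convergent_from_rationals[where F="\<lambda>n. hinge_eps k (eps n)" and C="KK + 2"
        and \<delta>=eps, OF hinge_eps_estimate _ eps_lim rat_conv y]) simp_all

definition hinge_lim :: "real \<Rightarrow> real \<Rightarrow> real" where
  "hinge_lim y a = lim (\<lambda>n. hinge_eps k (eps n) y a)"

lemma hinge_lim_tendsto: "0 \<le> y \<Longrightarrow> (\<lambda>n. hinge_eps k (eps n) y a) \<longlonglongrightarrow> hinge_lim y a"
  unfolding hinge_lim_def using hinge_eps_convergent convergent_LIMSEQ_iff by blast

lemma hinge_eps_tendsto:
  assumes nn: "filterlim nn sequentially sequentially" and ym: "ym \<longlonglongrightarrow> y" "\<And>m. 0 \<le> ym m" and y: "0 \<le> y"
  shows "(\<lambda>m. hinge_eps k (eps (nn m)) (ym m) a) \<longlonglongrightarrow> hinge_lim y a"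
proof -
  have A: "(\<lambda>m. hinge_eps k (eps (nn m)) y a) \<longlonglongrightarrow> hinge_lim y a"
    by (rule filterlim_compose[OF hinge_lim_tendsto[OF y] nn])
  have e: "(\<lambda>m. eps (nn m)) \<longlonglongrightarrow> 0"
    by (rule filterlim_compose[OF eps_lim nn])
  have g: "(\<lambda>m. (KK + 2) * (\<bar>ym m - y\<bar> + eps (nn m))) \<longlonglongrightarrow> (KK + 2) * (\<bar>y - y\<bar> + 0)"
    by (intro tendsto_intros ym e)
  have B: "(\<lambda>m. hinge_eps k (eps (nn m)) (ym m) a - hinge_eps k (eps (nn m)) y a) \<longlonglongrightarrow> 0"
  proof (rule Lim_null_comparison)
    show "\<forall>\<^sub>F m in sequentially. norm (hinge_eps k (eps (nn m)) (ym m) a - hinge_eps k (eps (nn m)) y a)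
        \<le> (KK + 2) * (\<bar>ym m - y\<bar> + eps (nn m))"
      using hinge_eps_estimate[OF ym(2) y, where a=a and a'=a] by (intro always_eventually allI) simp
    show "(\<lambda>m. (KK + 2) * (\<bar>ym m - y\<bar> + eps (nn m))) \<longlonglongrightarrow> 0" using g by simp
  qed
  have "(\<lambda>m. hinge_eps k (eps (nn m)) y a + (hinge_eps k (eps (nn m)) (ym m) a - hinge_eps k (eps (nn m)) y a)) \<longlonglongrightarrow> hinge_lim y a + 0"
    by (rule tendsto_add[OF A B])
  then show ?thesis by simp
qed

lemma hinge_lim_lipschitz:
  assumes y: "0 \<le> y" "0 \<le> y'"
  shows "\<bar>hinge_lim y a - hinge_lim y' a\<bar> \<le> (KK + 2) * \<bar>y - y'\<bar>"
proof -
  have 1: "(\<lambda>n. \<bar>hinge_eps k (eps n) y a - hinge_eps k (eps n) y' a\<bar>) \<longlonglongrightarrow> \<bar>hinge_lim y a - hinge_lim y' a\<bar>"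
    by (intro tendsto_intros hinge_lim_tendsto y)
  have 2: "(\<lambda>n. (KK + 2) * (\<bar>y - y'\<bar> + eps n)) \<longlonglongrightarrow> (KK + 2) * (\<bar>y - y'\<bar> + 0)"
    by (intro tendsto_intros eps_lim)
  have 3: "\<forall>\<^sub>F n in sequentially. \<bar>hinge_eps k (eps n) y a - hinge_eps k (eps n) y' a\<bar> \<le> (KK + 2) * (\<bar>y - y'\<bar> + eps n)"
    using hinge_eps_estimate[OF y, where a=a and a'=a] by (intro always_eventually allI) simp
  show ?thesis using tendsto_le[OF trivial_limit_sequentially 2 1 3] by simp
qed

definition approx_kernel :: "nat \<Rightarrow> real \<Rightarrow> real measure" where
  "approx_kernel n y = keps_measure k (eps n) y"

lemma approx_kernel_col: "0 \<le> y \<Longrightarrow> approx_kernel n y = col_measure k (eps n) (nat \<lfloor>y / eps n\<rfloor>)"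
  by (simp add: approx_kernel_def keps_measure_eq_col_measure)

lemma sets_approx_kernel[simp, measurable_cong]: "sets (approx_kernel n y) = sets borel"
  by (simp add: approx_kernel_def keps_measure_def)

lemma space_approx_kernel[simp]: "space (approx_kernel n y) = UNIV"
  by (simp add: approx_kernel_def keps_measure_def)

lemma mesh_index_le: assumes "0 \<le> y" shows "real (nat \<lfloor>y / eps n\<rfloor>) * eps n \<le> y"
proof -
  have "real (nat \<lfloor>y / eps n\<rfloor>) = of_int \<lfloor>y / eps n\<rfloor>" using assms eps_pos[of n] by simp
  also have "\<dots> \<le> y / eps n" by linarith
  finally show ?thesis using eps_pos[of n] by (simp add: field_simps)
qed

lemma AE_approx_kernel: assumes "0 \<le> y" shows "AE x in approx_kernel n y. 0 \<le> x \<and> x \<le> y"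
  using AE_col_measure[OF K eps_pos[of n], where J="nat \<lfloor>y / eps n\<rfloor>"] mesh_index_le[OF assms, of n]
  unfolding approx_kernel_col[OF assms] by (auto elim!: AE_mp)

lemma integrable_approx_kernel:
  fixes g :: "real \<Rightarrow> real"
  assumes y: "0 \<le> y" and g[measurable]: "g \<in> borel_measurable borel"
    and B: "\<And>x. 0 \<le> x \<Longrightarrow> x \<le> y \<Longrightarrow> \<bar>g x\<bar> \<le> B"
  shows "integrable (approx_kernel n y) g"
  unfolding approx_kernel_col[OF y]
  by (rule integrable_col_measure[OF K eps_pos[of n] g, where B=B]) (use B mesh_index_le[OF y, of n] in auto)

lemma approx_kernel_hinge: "0 \<le> y \<Longrightarrow> integral\<^sup>L (approx_kernel n y) (\<lambda>x. max 0 (a - x)) = hinge_eps k (eps n) y a"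
  unfolding hinge_eps_def hinge_moment_def by (simp add: approx_kernel_col)

lemma approx_kernel_cts_step:
  assumes y: "0 \<le> y" and ab: "a < b"
  shows "integral\<^sup>L (approx_kernel n y) (cts_step a b) = (hinge_eps k (eps n) y b - hinge_eps k (eps n) y a) / (b - a)"
proof -
  have int: "integrable (approx_kernel n y) (\<lambda>x. max 0 (c - x))" for c
    by (rule integrable_approx_kernel[OF y, where B="\<bar>c\<bar>"]) auto
  have "integral\<^sup>L (approx_kernel n y) (cts_step a b) = integral\<^sup>L (approx_kernel n y) (\<lambda>x. (max 0 (b - x) - max 0 (a - x)) / (b - a))"
    using ab by (intro Bochner_Integration.integral_cong) (auto simp: cts_step_hinge)
  also have "\<dots> = integral\<^sup>L (approx_kernel n y) (\<lambda>x. max 0 (b - x) - max 0 (a - x)) / (b - a)"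
    by (rule integral_divide_zero)
  also have "integral\<^sup>L (approx_kernel n y) (\<lambda>x. max 0 (b - x) - max 0 (a - x)) =
      integral\<^sup>L (approx_kernel n y) (\<lambda>x. max 0 (b - x)) - integral\<^sup>L (approx_kernel n y) (\<lambda>x. max 0 (a - x))"
    by (rule Bochner_Integration.integral_diff[OF int int])
  finally show ?thesis using approx_kernel_hinge[OF y] ab by simp
qed

lemma mesh_index_ge2: assumes "2 * eps n \<le> y" shows "2 \<le> nat \<lfloor>y / eps n\<rfloor>"
proof -
  have "2 \<le> y / eps n" using assms eps_pos[of n] by (simp add: field_simps)
  then show ?thesis by linarith
qed

lemma real_distribution_approx_kernel: assumes "2 * eps n \<le> y" shows "real_distribution (approx_kernel n y)"
proof -
  have y: "0 \<le> y" using assms eps_pos[of n] by linarith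
  show ?thesis unfolding approx_kernel_col[OF y] by (rule real_distribution_col_measure[OF K eps_pos mesh_index_ge2[OF assms]])
qed

definition step_lim :: "real \<Rightarrow> real \<Rightarrow> real \<Rightarrow> real" where
  "step_lim y a b = (hinge_lim y b - hinge_lim y a) / (b - a)"

lemma approx_kernel_cts_step_tendsto:
  assumes nn: "filterlim nn sequentially sequentially" and ym: "ym \<longlonglongrightarrow> y" "\<And>m. 0 \<le> ym m"
    and y: "0 \<le> y" and ab: "a < b"
  shows "(\<lambda>m. integral\<^sup>L (approx_kernel (nn m) (ym m)) (cts_step a b)) \<longlonglongrightarrow> step_lim y a b"
proof -
  have "(\<lambda>m. (hinge_eps k (eps (nn m)) (ym m) b - hinge_eps k (eps (nn m)) (ym m) a) / (b - a)) \<longlonglongrightarrow> step_lim y a b"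
    unfolding step_lim_def using ab by (intro tendsto_intros hinge_eps_tendsto[OF nn ym y]) auto
  then show ?thesis by (simp add: approx_kernel_cts_step[OF ym(2) ab])
qed

text \<open>The limit kernel \<open>k(\<cdot>,y)\<close>: the probability measure with the limiting \<open>cts_step\<close> integrals
  (unique by \<open>real_distribution_eqI_cts_step\<close>).\<close>
definition limit_kernel :: "real \<Rightarrow> real measure" where
  "limit_kernel y = (SOME \<nu>. real_distribution \<nu> \<and> (\<forall>a b. a < b \<longrightarrow> integral\<^sup>L \<nu> (cts_step a b) = step_lim y a b))"

text \<open>Helly selection: since the kernels at a fixed \<open>y > 0\<close> all live on \<open>[0,y]\<close>, a subsequence
  converges weakly.\<close>
lemma approx_kernel_weak_conv_subsequence:
  assumes y: "0 < y"
  obtains r N M where "strict_mono r" "real_distribution N"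
    "\<And>n. real_distribution (approx_kernel (r n + M) y)"
    "weak_conv_m (\<lambda>n. approx_kernel (r n + M) y) N"
proof -
  obtain M where M: "\<And>n. M \<le> n \<Longrightarrow> eps n < y / 2"
    using order_tendstoD(2)[OF eps_lim, of "y / 2"] y by (auto simp: eventually_sequentially)
  define \<nu> where "\<nu> n = approx_kernel (n + M) y" for n
  have rd: "real_distribution (\<nu> n)" for n
    unfolding \<nu>_def by (rule real_distribution_approx_kernel) (use M[of "n + M"] in simp)
  have mass: "measure (\<nu> n) {-1<..y} = 1" for n
  proof -
    interpret real_distribution "\<nu> n" by (rule rd)
    have "AE x in \<nu> n. x \<in> {-1<..y}"
      using AE_approx_kernel[of y "n + M"] y unfolding \<nu>_def by (auto elim!: AE_mp)
    then show ?thesis by (subst prob_eq_1) auto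
  qed
  have "tight \<nu>"
    unfolding tight_def
  proof (intro conjI allI impI)
    fix \<epsilon> :: real assume "0 < \<epsilon>"
    then show "\<exists>a b. a < b \<and> (\<forall>n. 1 - \<epsilon> < measure (\<nu> n) {a<..b})"
      using mass y by (intro exI[of _ "-1"] exI[of _ y]) auto
  qed (rule rd)
  then obtain r N where "strict_mono r" "real_distribution N" "weak_conv_m (\<nu> \<circ> id \<circ> r) N"
    using tight_imp_convergent_subsubsequence[of \<nu> id] by (auto simp: strict_mono_def)
  then show ?thesis using that[of r N M] rd by (simp add: \<nu>_def comp_def)
qed

lemma limit_kernel_exists:
  assumes y: "0 < y"
  shows "\<exists>\<nu>. real_distribution \<nu> \<and> (\<forall>a b. a < b \<longrightarrow> integral\<^sup>L \<nu> (cts_step a b) = step_lim y a b)"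
proof -
  obtain r N M where r: "strict_mono r" and N: "real_distribution N"
    and rd: "\<And>n. real_distribution (approx_kernel (r n + M) y)"
    and wc: "weak_conv_m (\<lambda>n. approx_kernel (r n + M) y) N"
    using approx_kernel_weak_conv_subsequence[OF y] by metis
  have "integral\<^sup>L N (cts_step a b) = step_lim y a b" if ab: "a < b" for a b
  proof -
    have "(\<lambda>n. integral\<^sup>L (approx_kernel (r n + M) y) (cts_step a b)) \<longlonglongrightarrow> integral\<^sup>L N (cts_step a b)"
      by (rule weak_conv_imp_integral_bdd_continuous_conv[OF rd N wc, where B=1])
         (use cts_step_isCont[OF ab] cts_step_abs[OF ab] in auto)
    moreover have "filterlim (\<lambda>n. r n + M) sequentially sequentially"
      by (rule filterlim_sequentially_ge_id) (use seq_suble[OF r] in \<open>auto intro: le_add1 order_trans\<close>)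
    then have "(\<lambda>n. integral\<^sup>L (approx_kernel (r n + M) y) (cts_step a b)) \<longlonglongrightarrow> step_lim y a b"
      using approx_kernel_cts_step_tendsto[OF _ tendsto_const _ _ ab, of _ y] y by simp
    ultimately show ?thesis using LIMSEQ_unique by blast
  qed
  then show ?thesis using N by blast
qed

lemma real_distribution_limit_kernel: "0 < y \<Longrightarrow> real_distribution (limit_kernel y)"
  unfolding limit_kernel_def using someI_ex[OF limit_kernel_exists] by blast

lemma limit_kernel_cts_step: "0 < y \<Longrightarrow> a < b \<Longrightarrow> integral\<^sup>L (limit_kernel y) (cts_step a b) = step_lim y a b"
  unfolding limit_kernel_def using someI_ex[OF limit_kernel_exists] by blast

lemma approx_kernel_weak_conv:
  fixes g :: "real \<Rightarrow> real"
  assumes nn: "filterlim nn sequentially sequentially" and ym: "ym \<longlonglongrightarrow> y" "\<And>m. 0 \<le> ym m"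
    and y: "0 < y" and g: "\<And>x. isCont g x" "\<And>x. \<bar>g x\<bar> \<le> B"
  shows "(\<lambda>m. integral\<^sup>L (approx_kernel (nn m) (ym m)) g) \<longlonglongrightarrow> integral\<^sup>L (limit_kernel y) g"
proof -
  have e: "(\<lambda>m. eps (nn m)) \<longlonglongrightarrow> 0"
    by (rule filterlim_compose[OF eps_lim nn])
  have ev1: "eventually (\<lambda>m. eps (nn m) < y / 4) sequentially"
    using order_tendstoD(2)[OF e, of "y / 4"] y by simp
  have ev2: "eventually (\<lambda>m. y / 2 < ym m) sequentially"
    using order_tendstoD(1)[OF ym(1), of "y / 2"] y by simp
  have "eventually (\<lambda>m. 2 * eps (nn m) \<le> ym m) sequentially"
    using ev1 ev2 by eventually_elim simp
  then have "\<forall>\<^sub>F m in sequentially. real_distribution (approx_kernel (nn m) (ym m))"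
    by eventually_elim (rule real_distribution_approx_kernel)
  then show ?thesis
  proof (rule cts_step_conv_imp_integral_conv[OF _ real_distribution_limit_kernel[OF y] _ g])
    fix a b :: real assume ab: "a < b"
    show "(\<lambda>m. integral\<^sup>L (approx_kernel (nn m) (ym m)) (cts_step a b)) \<longlonglongrightarrow> integral\<^sup>L (limit_kernel y) (cts_step a b)"
      using approx_kernel_cts_step_tendsto[OF nn ym _ ab] y by (simp add: limit_kernel_cts_step[OF y ab])
  qed
qed

lemma hinge_lim_continuous:
  assumes ym: "ym \<longlonglongrightarrow> y" "\<And>m. 0 \<le> ym m" and y: "0 \<le> y"
  shows "(\<lambda>m. hinge_lim (ym m) a) \<longlonglongrightarrow> hinge_lim y a"
proof -
  have "(\<lambda>m. hinge_lim (ym m) a - hinge_lim y a) \<longlonglongrightarrow> 0"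
  proof (rule Lim_null_comparison)
    show "\<forall>\<^sub>F m in sequentially. norm (hinge_lim (ym m) a - hinge_lim y a) \<le> (KK + 2) * \<bar>ym m - y\<bar>"
      using hinge_lim_lipschitz[OF ym(2) y] by (intro always_eventually allI) simp
    have "(\<lambda>m. (KK + 2) * \<bar>ym m - y\<bar>) \<longlonglongrightarrow> (KK + 2) * \<bar>y - y\<bar>"
      by (intro tendsto_intros ym)
    then show "(\<lambda>m. (KK + 2) * \<bar>ym m - y\<bar>) \<longlonglongrightarrow> 0" by simp
  qed
  then have "(\<lambda>m. hinge_lim y a + (hinge_lim (ym m) a - hinge_lim y a)) \<longlonglongrightarrow> hinge_lim y a + 0"
    by (intro tendsto_add tendsto_const)
  then show ?thesis by simp
qed

lemma limit_kernel_weak_cont: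
  fixes g :: "real \<Rightarrow> real"
  assumes ym: "ym \<longlonglongrightarrow> y" "\<And>m. 0 < ym m"
    and y: "0 < y" and g: "\<And>x. isCont g x" "\<And>x. \<bar>g x\<bar> \<le> B"
  shows "(\<lambda>m. integral\<^sup>L (limit_kernel (ym m)) g) \<longlonglongrightarrow> integral\<^sup>L (limit_kernel y) g"
proof (rule cts_step_conv_imp_integral_conv[OF _ real_distribution_limit_kernel[OF y] _ g])
  show "\<forall>\<^sub>F m in sequentially. real_distribution (limit_kernel (ym m))"
    using real_distribution_limit_kernel[OF ym(2)] by simp
  fix a b :: real assume ab: "a < b"
  have ym0: "\<And>m. 0 \<le> ym m" using ym(2) less_imp_le by blast
  have "(\<lambda>m. step_lim (ym m) a b) \<longlonglongrightarrow> step_lim y a b"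
    unfolding step_lim_def using y ab by (intro tendsto_intros hinge_lim_continuous[OF ym(1) ym0]) auto
  then show "(\<lambda>m. integral\<^sup>L (limit_kernel (ym m)) (cts_step a b)) \<longlonglongrightarrow> integral\<^sup>L (limit_kernel y) (cts_step a b)"
    by (simp add: limit_kernel_cts_step[OF y ab] limit_kernel_cts_step[OF ym(2) ab])
qed

lemma approx_kernel_cts_step_limit:
  assumes y: "0 < y" and ab: "a < b"
  shows "(\<lambda>n. integral\<^sup>L (approx_kernel n y) (cts_step a b)) \<longlonglongrightarrow> integral\<^sup>L (limit_kernel y) (cts_step a b)"
  using approx_kernel_cts_step_tendsto[OF filterlim_ident tendsto_const _ _ ab, of y] y limit_kernel_cts_step[OF y ab] by simp

lemma measure_approx_kernel: assumes "2 * eps n \<le> y" shows "measure (approx_kernel n y) UNIV = 1"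
proof -
  interpret real_distribution "approx_kernel n y" by (rule real_distribution_approx_kernel[OF assms])
  show ?thesis using prob_space by simp
qed

lemma eventually_two_eps_le: assumes y: "0 < y" shows "eventually (\<lambda>n. 2 * eps n \<le> y) sequentially"
proof -
  have "eventually (\<lambda>n. eps n < y / 2) sequentially"
    using order_tendstoD(2)[OF eps_lim, of "y / 2"] y by simp
  then show ?thesis by eventually_elim simp
qed

lemma limit_kernel_cdf_neg:
  assumes y: "0 < y" and a: "a < 0"
  shows "cdf (limit_kernel y) a = 0"
proof -
  interpret real_distribution "limit_kernel y" by (rule real_distribution_limit_kernel[OF y])
  have ab: "a < a / 2" using a by simp
  have z: "integral\<^sup>L (approx_kernel n y) (cts_step a (a / 2)) = 0" for n
  proof (rule integral_eq_zero_AE)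
    show "AE x in approx_kernel n y. cts_step a (a / 2) x = 0"
      using AE_approx_kernel[of y n] y a by (auto elim!: AE_mp simp: cts_step_def)
  qed
  have "(\<lambda>n. integral\<^sup>L (approx_kernel n y) (cts_step a (a / 2))) \<longlonglongrightarrow> integral\<^sup>L (limit_kernel y) (cts_step a (a / 2))"
    by (rule approx_kernel_cts_step_limit[OF y ab])
  then have "integral\<^sup>L (limit_kernel y) (cts_step a (a / 2)) = 0"
    unfolding z by (simp add: LIMSEQ_const_iff)
  then have "cdf (limit_kernel y) a \<le> 0" using cdf_cts_step(1)[OF ab] by simp
  then show ?thesis using cdf_nonneg[of a] by simp
qed

lemma limit_kernel_cdf_above:
  assumes y: "0 < y" and b: "y < b"
  shows "cdf (limit_kernel y) b = 1"
proof -
  interpret real_distribution "limit_kernel y" by (rule real_distribution_limit_kernel[OF y])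
  have ev: "eventually (\<lambda>n. integral\<^sup>L (approx_kernel n y) (cts_step y b) = 1) sequentially"
    using eventually_two_eps_le[OF y]
  proof eventually_elim
    case (elim n)
    have "integral\<^sup>L (approx_kernel n y) (cts_step y b) = integral\<^sup>L (approx_kernel n y) (\<lambda>x. 1)"
    proof (rule integral_cong_AE)
      show "AE x in approx_kernel n y. cts_step y b x = 1"
        using AE_approx_kernel[of y n] y by (auto elim!: AE_mp simp: cts_step_def)
    qed auto
    then show ?case using measure_approx_kernel[OF elim] by simp
  qed
  have "(\<lambda>n. integral\<^sup>L (approx_kernel n y) (cts_step y b)) \<longlonglongrightarrow> 1"
    by (rule tendsto_eventually[OF ev])
  then have "integral\<^sup>L (limit_kernel y) (cts_step y b) = 1"
    using approx_kernel_cts_step_limit[OF y b] LIMSEQ_unique by blast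
  then have "1 \<le> cdf (limit_kernel y) b" using cdf_cts_step(2)[OF b] by simp
  then show ?thesis using cdf_bounded_prob[of b] by simp
qed

lemma limit_kernel_support:
  assumes y: "0 < y"
  shows "measure (limit_kernel y) {0..y} = 1" and "AE x in limit_kernel y. 0 \<le> x \<and> x \<le> y"
proof -
  interpret real_distribution "limit_kernel y" by (rule real_distribution_limit_kernel[OF y])
  have "((cdf (limit_kernel y)) \<longlongrightarrow> 0) (at_left 0)"
  proof (rule tendsto_eventually)
    show "eventually (\<lambda>x. cdf (limit_kernel y) x = 0) (at_left 0)"
      by (rule eventually_at_leftI[of "-1"]) (auto intro: limit_kernel_cdf_neg[OF y])
  qed
  then have m0: "measure (limit_kernel y) {..<0} = 0"
    using cdf_at_left[of 0] tendsto_unique[OF trivial_limit_at_left_real] by blast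
  have "((cdf (limit_kernel y)) \<longlongrightarrow> 1) (at_right y)"
  proof (rule tendsto_eventually)
    show "eventually (\<lambda>x. cdf (limit_kernel y) x = 1) (at_right y)"
      by (rule eventually_at_rightI[of _ "y + 1"]) (auto intro: limit_kernel_cdf_above[OF y])
  qed
  moreover have "((cdf (limit_kernel y)) \<longlongrightarrow> cdf (limit_kernel y) y) (at_right y)"
    using cdf_is_right_cont[of y] by (simp add: continuous_within)
  ultimately have "cdf (limit_kernel y) y = 1"
    using tendsto_unique[OF trivial_limit_at_right_real] by blast
  then have m1: "measure (limit_kernel y) {..y} = 1" by (simp add: cdf_def)
  have "{0..y} = {..y} - {..<0}" by auto
  moreover have "measure (limit_kernel y) ({..y} - {..<0}) = measure (limit_kernel y) {..y} - measure (limit_kernel y) {..<0}"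
    by (rule finite_measure_Diff) (use y in \<open>auto simp: subset_eq\<close>)
  ultimately have "measure (limit_kernel y) {0..y} = measure (limit_kernel y) {..y} - measure (limit_kernel y) {..<0}"
    by simp
  then show m: "measure (limit_kernel y) {0..y} = 1" using m0 m1 by simp
  have "AE x in limit_kernel y. x \<in> {0..y}"
    using m by (subst prob_eq_1[symmetric]) auto
  then show "AE x in limit_kernel y. 0 \<le> x \<and> x \<le> y" by auto
qed

lemma reflection_point_close:
  assumes y: "0 \<le> y"
  shows "\<bar>real (Suc (nat \<lfloor>y / eps n\<rfloor>)) * eps n - y\<bar> \<le> eps n"
proof -
  have e: "0 < eps n" by (rule eps_pos)
  have r: "real (nat \<lfloor>y / eps n\<rfloor>) = of_int \<lfloor>y / eps n\<rfloor>" using y e by simp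
  have "y / eps n < of_int \<lfloor>y / eps n\<rfloor> + 1" by linarith
  then have 1: "y < (real (nat \<lfloor>y / eps n\<rfloor>) + 1) * eps n" using e unfolding r by (simp add: field_simps)
  have 2: "real (nat \<lfloor>y / eps n\<rfloor>) * eps n \<le> y" by (rule mesh_index_le[OF y])
  show ?thesis using 1 2 by (simp add: algebra_simps)
qed

lemma approx_kernel_reflect:
  fixes g :: "real \<Rightarrow> real"
  assumes y: "0 \<le> y" and g[measurable]: "g \<in> borel_measurable borel" and B: "\<And>x. \<bar>g x\<bar> \<le> B"
  shows "integral\<^sup>L (approx_kernel n y) (\<lambda>x. g (real (Suc (nat \<lfloor>y / eps n\<rfloor>)) * eps n - x)) = integral\<^sup>L (approx_kernel n y) g"
  unfolding approx_kernel_col[OF y] by (rule col_measure_reflect[OF K eps_pos g B])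

lemma approx_kernel_almost_symmetric:
  assumes y: "0 \<le> y" and n: "2 * eps n \<le> y" and ab: "a < b"
  shows "\<bar>integral\<^sup>L (approx_kernel n y) (cts_step a b) - (1 - integral\<^sup>L (approx_kernel n y) (cts_step (y - b) (y - a)))\<bar>
    \<le> 2 * eps n / (b - a)"
proof -
  interpret real_distribution "approx_kernel n y" by (rule real_distribution_approx_kernel[OF n])
  define c where "c = real (Suc (nat \<lfloor>y / eps n\<rfloor>)) * eps n"
  have cy: "\<bar>c - y\<bar> \<le> eps n" unfolding c_def by (rule reflection_point_close[OF y])
  have ab': "c - b < c - a" "y - b < y - a" using ab by auto
  have int: "integrable (approx_kernel n y) (cts_step a' b')" if "a' < b'" for a' b'
    by (rule integrable_const_bound[where B=1]) (use cts_step_abs[OF that] in auto)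
  have "integral\<^sup>L (approx_kernel n y) (cts_step a b) = integral\<^sup>L (approx_kernel n y) (\<lambda>x. cts_step a b (c - x))"
    unfolding c_def by (rule approx_kernel_reflect[OF y cts_step_measurable cts_step_abs[OF ab], symmetric])
  also have "\<dots> = integral\<^sup>L (approx_kernel n y) (\<lambda>x. 1 - cts_step (c - b) (c - a) x)"
    by (intro Bochner_Integration.integral_cong refl) (simp add: cts_step_reflect[OF ab])
  also have "\<dots> = 1 - integral\<^sup>L (approx_kernel n y) (cts_step (c - b) (c - a))"
    using Bochner_Integration.integral_diff[OF integrable_const int[OF ab'(1)], of 1] prob_space by simp
  finally have X: "integral\<^sup>L (approx_kernel n y) (cts_step a b) = 1 - integral\<^sup>L (approx_kernel n y) (cts_step (c - b) (c - a))" .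
  have sh: "\<bar>cts_step (c - b) (c - a) x - cts_step (y - b) (y - a) x\<bar> \<le> 2 * eps n / (b - a)" for x
  proof -
    have "\<bar>cts_step ((y - b) + (c - y)) ((y - a) + (c - y)) x - cts_step (y - b) (y - a) x\<bar>
        \<le> 2 * \<bar>c - y\<bar> / ((y - a) - (y - b))"
      by (rule cts_step_shift[OF ab'(2)])
    also have "\<dots> \<le> 2 * eps n / (b - a)"
      using cy ab by (simp add: divide_right_mono)
    finally show ?thesis by simp
  qed
  have "\<bar>integral\<^sup>L (approx_kernel n y) (cts_step (c - b) (c - a)) - integral\<^sup>L (approx_kernel n y) (cts_step (y - b) (y - a))\<bar>
      = \<bar>integral\<^sup>L (approx_kernel n y) (\<lambda>x. cts_step (c - b) (c - a) x - cts_step (y - b) (y - a) x)\<bar>"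
    by (subst Bochner_Integration.integral_diff[OF int[OF ab'(1)] int[OF ab'(2)]]) simp
  also have "\<dots> \<le> integral\<^sup>L (approx_kernel n y) (\<lambda>x. 2 * eps n / (b - a))"
    by (rule integral_abs_bound_integral)
       (auto intro!: Bochner_Integration.integrable_diff int ab' sh)
  also have "\<dots> = 2 * eps n / (b - a)" using prob_space by simp
  finally show ?thesis using X by simp
qed

lemma step_lim_reflect:
  assumes y: "0 < y" and ab: "a < b"
  shows "step_lim y a b = 1 - step_lim y (y - b) (y - a)"
proof -
  have ab': "y - b < y - a" using ab by simp
  have X: "(\<lambda>n. integral\<^sup>L (approx_kernel n y) (cts_step a b)) \<longlonglongrightarrow> step_lim y a b"
    using approx_kernel_cts_step_limit[OF y ab] limit_kernel_cts_step[OF y ab] by simp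
  have Y: "(\<lambda>n. integral\<^sup>L (approx_kernel n y) (cts_step (y - b) (y - a))) \<longlonglongrightarrow> step_lim y (y - b) (y - a)"
    using approx_kernel_cts_step_limit[OF y ab'] limit_kernel_cts_step[OF y ab'] by simp
  have 1: "(\<lambda>n. integral\<^sup>L (approx_kernel n y) (cts_step a b) - (1 - integral\<^sup>L (approx_kernel n y) (cts_step (y - b) (y - a))))
      \<longlonglongrightarrow> step_lim y a b - (1 - step_lim y (y - b) (y - a))"
    by (intro tendsto_intros X Y)
  have 2: "(\<lambda>n. integral\<^sup>L (approx_kernel n y) (cts_step a b) - (1 - integral\<^sup>L (approx_kernel n y) (cts_step (y - b) (y - a))))
      \<longlonglongrightarrow> 0"
  proof (rule Lim_null_comparison)
    show "\<forall>\<^sub>F n in sequentially. norm (integral\<^sup>L (approx_kernel n y) (cts_step a b) - (1 - integral\<^sup>L (approx_kernel n y) (cts_step (y - b) (y - a))))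
        \<le> 2 * eps n / (b - a)"
      using eventually_two_eps_le[OF y] by eventually_elim (use approx_kernel_almost_symmetric y ab in auto)
    have "(\<lambda>n. 2 * eps n / (b - a)) \<longlonglongrightarrow> 2 * 0 / (b - a)"
      by (intro tendsto_intros eps_lim) (use ab in auto)
    then show "(\<lambda>n. 2 * eps n / (b - a)) \<longlonglongrightarrow> 0" by simp
  qed
  from LIMSEQ_unique[OF 1 2] show ?thesis by simp
qed

lemma limit_kernel_symmetric:
  assumes y: "0 < y"
  shows "distr (limit_kernel y) borel (\<lambda>x. y - x) = limit_kernel y"
proof -
  interpret real_distribution "limit_kernel y" by (rule real_distribution_limit_kernel[OF y])
  have rd: "real_distribution (distr (limit_kernel y) borel (\<lambda>x. y - x))"
    by (rule real_distribution_distr) simp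
  show ?thesis
  proof (rule real_distribution_eqI_cts_step[OF rd real_distribution_limit_kernel[OF y]])
    fix a b :: real assume ab: "a < b"
    have ab': "y - b < y - a" using ab by simp
    have int: "integrable (limit_kernel y) (cts_step (y - b) (y - a))"
      by (rule integrable_const_bound[where B=1]) (use cts_step_abs[OF ab'] in auto)
    have "integral\<^sup>L (distr (limit_kernel y) borel (\<lambda>x. y - x)) (cts_step a b) = integral\<^sup>L (limit_kernel y) (\<lambda>x. cts_step a b (y - x))"
      by (rule integral_distr) auto
    also have "\<dots> = integral\<^sup>L (limit_kernel y) (\<lambda>x. 1 - cts_step (y - b) (y - a) x)"
      by (intro Bochner_Integration.integral_cong refl) (simp add: cts_step_reflect[OF ab])
    also have "\<dots> = 1 - integral\<^sup>L (limit_kernel y) (cts_step (y - b) (y - a))"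
      using Bochner_Integration.integral_diff[OF integrable_const int, of 1] prob_space by simp
    also have "\<dots> = 1 - step_lim y (y - b) (y - a)" by (simp add: limit_kernel_cts_step[OF y ab'])
    also have "\<dots> = step_lim y a b" by (rule step_lim_reflect[OF y ab, symmetric])
    also have "\<dots> = integral\<^sup>L (limit_kernel y) (cts_step a b)" by (simp add: limit_kernel_cts_step[OF y ab])
    finally show "integral\<^sup>L (distr (limit_kernel y) borel (\<lambda>x. y - x)) (cts_step a b) = integral\<^sup>L (limit_kernel y) (cts_step a b)" .
  qed
qed

text \<open>Property (1), mean: symmetry about \<open>y/2\<close> gives \<open>2 \<integral> x k(dx,y) = y\<close>.\<close>
lemma limit_kernel_mean:
  assumes y: "0 < y"
  shows "2 * (\<integral>x. x \<partial>(limit_kernel y)) = y"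
proof -
  interpret real_distribution "limit_kernel y" by (rule real_distribution_limit_kernel[OF y])
  have int: "integrable (limit_kernel y) (\<lambda>x. x)"
  proof (rule integrable_const_bound[where B=y])
    show "AE x in limit_kernel y. norm x \<le> y" using limit_kernel_support(2)[OF y] by (auto elim!: AE_mp)
  qed simp
  have "(\<integral>x. x \<partial>(limit_kernel y)) = (\<integral>x. x \<partial>(distr (limit_kernel y) borel (\<lambda>x. y - x)))"
    by (simp add: limit_kernel_symmetric[OF y])
  also have "\<dots> = (\<integral>x. y - x \<partial>(limit_kernel y))"
    by (rule integral_distr) auto
  also have "\<dots> = y - (\<integral>x. x \<partial>(limit_kernel y))"
    using Bochner_Integration.integral_diff[OF integrable_const int, of y] prob_space by simp
  finally show ?thesis by simp
qed

lemma limit_kernel_weak_limit: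
  fixes f :: "real \<Rightarrow> real"
  assumes y: "0 < y" and f: "continuous_on {0..} f" "bounded (f ` {0..})"
  shows "(\<lambda>n. integral\<^sup>L (keps_measure k (eps n) y) f) \<longlonglongrightarrow> integral\<^sup>L (limit_kernel y) f"
proof -
  have "(\<lambda>n. integral\<^sup>L (approx_kernel n y) f) \<longlonglongrightarrow> integral\<^sup>L (limit_kernel y) f"
  proof (rule integral_conv_on_nonneg[OF _ _ _ _ f])
    show "sets (limit_kernel y) = sets borel"
      using real_distribution_limit_kernel[OF y] real_distribution.events_eq_borel by blast
    show "AE x in approx_kernel n y. 0 \<le> x" for n
      using AE_approx_kernel y by (auto elim!: AE_mp)
    show "AE x in limit_kernel y. 0 \<le> x"
      using limit_kernel_support(2)[OF y] by (auto elim!: AE_mp)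
    show "(\<lambda>n. integral\<^sup>L (approx_kernel n y) g) \<longlonglongrightarrow> integral\<^sup>L (limit_kernel y) g"
      if "\<And>x. isCont g x" "\<And>x. \<bar>g x\<bar> \<le> B" for g :: "real \<Rightarrow> real" and B
      using approx_kernel_weak_conv[OF filterlim_ident tendsto_const _ y that] y by simp
  qed simp
  then show ?thesis by (simp add: approx_kernel_def)
qed

lemma limit_kernel_weak_star_continuous:
  fixes f :: "real \<Rightarrow> real"
  assumes c: "continuous_on {0..} f" and t: "(f \<longlongrightarrow> 0) at_top"
  shows "continuous_on {0<..} (\<lambda>y. \<integral>x. f x \<partial>(limit_kernel y))"
proof (rule continuous_on_sequentiallyI)
  fix u :: "nat \<Rightarrow> real" and a assume u: "\<forall>n. u n \<in> {0<..}" and a: "a \<in> {0<..}" and ua: "u \<longlonglongrightarrow> a"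
  have u0: "\<And>n. 0 < u n" and a0: "0 < a" using u a by auto
  show "(\<lambda>n. integral\<^sup>L (limit_kernel (u n)) f) \<longlonglongrightarrow> integral\<^sup>L (limit_kernel a) f"
  proof (rule integral_conv_on_nonneg[OF _ _ _ _ c C0_bounded[OF c t]])
    show "sets (limit_kernel (u n)) = sets borel" "sets (limit_kernel a) = sets borel" for n
      using real_distribution_limit_kernel[OF u0] real_distribution_limit_kernel[OF a0]
        real_distribution.events_eq_borel by blast+
    show "AE x in limit_kernel (u n). 0 \<le> x" "AE x in limit_kernel a. 0 \<le> x" for n
      using limit_kernel_support(2)[OF u0] limit_kernel_support(2)[OF a0] by (auto elim!: AE_mp)
    show "(\<lambda>n. integral\<^sup>L (limit_kernel (u n)) g) \<longlonglongrightarrow> integral\<^sup>L (limit_kernel a) g"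
      if "\<And>x. isCont g x" "\<And>x. \<bar>g x\<bar> \<le> B" for g :: "real \<Rightarrow> real" and B
      by (rule limit_kernel_weak_cont[OF ua u0 a0 that])
  qed
qed

lemma set_integral_keps:
  fixes \<phi> :: "real \<Rightarrow> real"
  assumes y: "0 < y" and pm[measurable]: "\<phi> \<in> borel_measurable borel"
  shows "(LINT x:{0..y}|lborel. keps k (eps n) x y * \<phi> x) = integral\<^sup>L (approx_kernel n y) \<phi>"
proof -
  define J where "J = nat \<lfloor>y / eps n\<rfloor>"
  have kk': "keps k (eps n) x y = col_density k (eps n) J x" for x
    using y unfolding keps_def col_density_def J_def by auto
  have Jle: "real J * eps n \<le> y" unfolding J_def by (rule mesh_index_le) (use y in simp)
  have "integral\<^sup>L (approx_kernel n y) \<phi> = integral\<^sup>L lborel (\<lambda>x. col_density k (eps n) J x *\<^sub>R \<phi> x)"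
    unfolding approx_kernel_col[OF less_imp_le[OF y]] J_def[symmetric] col_measure_def
    by (rule integral_density) (auto simp: col_density_nonneg[OF K eps_pos])
  also have "\<dots> = (LINT x:{0..y}|lborel. keps k (eps n) x y * \<phi> x)"
    unfolding set_lebesgue_integral_def
  proof (rule Bochner_Integration.integral_cong[OF refl])
    fix x
    show "col_density k (eps n) J x *\<^sub>R \<phi> x = indicator {0..y} x *\<^sub>R (keps k (eps n) x y * \<phi> x)"
    proof (cases "x \<in> {0..y}")
      case True then show ?thesis by (simp add: kk')
    next
      case False
      then have "x < 0 \<or> real J * eps n < x" using Jle by auto
      then have "col_density k (eps n) J x = 0" by (rule col_density_outside[OF K eps_pos])
      then show ?thesis using False by simp
    qed
  qed
  finally show ?thesis by simp
qed

lemma set_integral_limit_kernel: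
  fixes \<phi> :: "real \<Rightarrow> real"
  assumes y: "0 < y" and pm[measurable]: "\<phi> \<in> borel_measurable borel"
  shows "(LINT x:{0..y}|(limit_kernel y). \<phi> x) = integral\<^sup>L (limit_kernel y) \<phi>"
proof -
  have s: "sets (limit_kernel y) = sets borel" using real_distribution_limit_kernel[OF y] real_distribution.events_eq_borel by blast
  show ?thesis
    unfolding set_lebesgue_integral_def
  proof (rule integral_cong_AE)
    have bm: "borel_measurable (limit_kernel y) = borel_measurable borel" by (rule measurable_cong_sets[OF s refl])
    show "(\<lambda>x. indicator {0..y} x *\<^sub>R \<phi> x) \<in> borel_measurable (limit_kernel y)" "\<phi> \<in> borel_measurable (limit_kernel y)"
      unfolding bm by auto
    show "AE x in limit_kernel y. indicator {0..y} x *\<^sub>R \<phi> x = \<phi> x"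
      using limit_kernel_support(2)[OF y] by (auto elim!: AE_mp)
  qed
qed

text \<open>For a limit \<open>l > 0\<close> this is the joint weak convergence; for \<open>l = 0\<close> both
  integrals eventually vanish because \<open>\<phi>\<close> vanishes near 0.\<close>
lemma test_function_integrals_close:
  fixes \<phi> :: "real \<Rightarrow> real"
  assumes C: "Cc_infty_pos \<phi>" and nn: "filterlim nn sequentially sequentially"
    and ys: "\<And>m. 0 < ys m" and lim: "ys \<longlonglongrightarrow> l"
  shows "(\<lambda>m. dist (integral\<^sup>L (approx_kernel (nn m) (ys m)) \<phi>) (integral\<^sup>L (limit_kernel (ys m)) \<phi>)) \<longlonglongrightarrow> 0"
proof (cases "l = 0")
  case False
  have "0 \<le> l" using ys lim by (intro LIMSEQ_le_const[OF lim]) (auto intro: less_imp_le)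
  with False have l0: "0 < l" by simp
  have cont: "\<And>x. isCont \<phi> x" using Cc_infty_pos_isCont[OF C] .
  obtain B where B: "\<And>x. \<bar>\<phi> x\<bar> \<le> B" using Cc_infty_pos_bounded[OF C] by blast
  have "(\<lambda>m. dist (integral\<^sup>L (approx_kernel (nn m) (ys m)) \<phi>) (integral\<^sup>L (limit_kernel (ys m)) \<phi>))
      \<longlonglongrightarrow> dist (integral\<^sup>L (limit_kernel l) \<phi>) (integral\<^sup>L (limit_kernel l) \<phi>)"
    by (intro tendsto_dist approx_kernel_weak_conv[OF nn lim less_imp_le[OF ys] l0 cont B]
        limit_kernel_weak_cont[OF lim ys l0 cont B])
  then show ?thesis by simp
next
  case True
  obtain a0 where a0: "0 < a0" "\<And>x. x < a0 \<Longrightarrow> \<phi> x = 0"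
    using Cc_infty_pos_vanishes_near_0[OF C] by blast
  have "\<forall>\<^sub>F m in sequentially. ys m < a0"
    using order_tendstoD(2)[OF lim, of a0] a0(1) True by simp
  then have "\<forall>\<^sub>F m in sequentially.
      dist (integral\<^sup>L (approx_kernel (nn m) (ys m)) \<phi>) (integral\<^sup>L (limit_kernel (ys m)) \<phi>) = 0"
  proof eventually_elim
    case (elim m)
    have "AE x in approx_kernel (nn m) (ys m). \<phi> x = 0"
      using AE_approx_kernel[of "ys m" "nn m"] ys[of m] elim a0(2) by (auto elim!: AE_mp)
    moreover have "AE x in limit_kernel (ys m). \<phi> x = 0"
      using limit_kernel_support(2)[OF ys[of m]] elim a0(2) by (auto elim!: AE_mp)
    ultimately show ?case by (simp add: integral_eq_zero_AE)
  qed
  then show ?thesis by (rule tendsto_eventually)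
qed

text \<open>Property (4): uniform convergence of \<open>\<phi>\<^sup>\<epsilon>\<close> to \<open>\<phi>\<close> on \<open>(0,R]\<close>, by the sequential criterion
  on the compact closure \<open>[0,R]\<close>.\<close>
lemma limit_kernel_uniform_limit:
  fixes \<phi> :: "real \<Rightarrow> real"
  assumes C: "Cc_infty_pos \<phi>"
  shows "uniform_limit {0<..R}
          (\<lambda>n y. LINT x:{0..y}|lborel. keps k (eps n) x y * \<phi> x)
          (\<lambda>y. LINT x:{0..y}|(limit_kernel y). \<phi> x)
          sequentially"
proof -
  have meas[measurable]: "\<phi> \<in> borel_measurable borel"
    using Cc_infty_pos_isCont[OF C]
    by (intro borel_measurable_continuous_onI continuous_at_imp_continuous_on) auto
  have "uniform_limit {0<..R} (\<lambda>n y. integral\<^sup>L (approx_kernel n y) \<phi>)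
      (\<lambda>y. integral\<^sup>L (limit_kernel y) \<phi>) sequentially"
    by (rule uniform_limit_sequentially_compact[of "{0..R}"])
       (auto intro!: test_function_integrals_close[OF C])
  moreover have "(LINT x:{0..y}|lborel. keps k (eps n) x y * \<phi> x) = integral\<^sup>L (approx_kernel n y) \<phi>"
    and "(LINT x:{0..y}|(limit_kernel y). \<phi> x) = integral\<^sup>L (limit_kernel y) \<phi>"
    if "y \<in> {0<..R}" for n y
    using that by (auto intro: set_integral_keps set_integral_limit_kernel)
  ultimately show ?thesis
    by (subst uniform_limit_cong') auto
qed

end


theorem mainTheorem3:
  fixes k :: "nat \<Rightarrow> nat \<Rightarrow> real"
  assumes "condK k" and "condKC k"
  shows "\<exists>(eps :: nat \<Rightarrow> real) (kk :: real \<Rightarrow> real measure).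
    (\<forall>n. 0 < eps n) \<and> eps \<longlonglongrightarrow> 0 \<and>
    (\<forall>y>0. prob_space (kk y) \<and> sets (kk y) = sets borel) \<and>
    \<comment> \<open>(1)\<close>
    (\<forall>y>0. measure (kk y) {0..y} = 1 \<and>
           distr (kk y) borel (\<lambda>x. y - x) = kk y \<and>
           2 * (\<integral>x. x \<partial>(kk y)) = y) \<and>
    \<comment> \<open>(2) weak-star continuity: against every f in C_0([0,\<infinity>))\<close>
    (\<forall>f :: real \<Rightarrow> real. continuous_on {0..} f \<and> (f \<longlongrightarrow> 0) at_top \<longrightarrow>
        continuous_on {0<..} (\<lambda>y. \<integral>x. f x \<partial>(kk y))) \<and>
    \<comment> \<open>(3) weak convergence in law\<close>
    (\<forall>y>0. \<forall>f :: real \<Rightarrow> real. continuous_on {0..} f \<and> bounded (f ` {0..}) \<longrightarrow>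
        (\<lambda>n. \<integral>x. f x \<partial>(keps_measure k (eps n) y)) \<longlonglongrightarrow> (\<integral>x. f x \<partial>(kk y))) \<and>
    \<comment> \<open>(4) uniform convergence on compacts\<close>
    (\<forall>\<phi>. Cc_infty_pos \<phi> \<longrightarrow> (\<forall>R>0.
        uniform_limit {0<..R}
          (\<lambda>n y. LINT x:{0..y}|lborel. keps k (eps n) x y * \<phi> x)
          (\<lambda>y. LINT x:{0..y}|(kk y). \<phi> x)
          sequentially))"
proof -
  obtain KK where KC: "\<And>J m. \<bar>kc_sum k (Suc J) m - kc_sum k J m\<bar> \<le> KK"
    using assms(2) unfolding condKC_def kc_sum_def Suc_eq_plus1 by blast
  obtain eps where eps: "\<And>n. 0 < eps n" "eps \<longlonglongrightarrow> 0"
    and rat: "\<And>q r. q \<in> \<rat> \<Longrightarrow> r \<in> \<rat> \<Longrightarrow> convergent (\<lambda>n. hinge_eps k (eps n) q r)"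
    using mesh_sequence_converging_on_rationals[of "hinge_eps k" "\<lambda>y a. \<bar>a\<bar>"]
      hinge_eps_abs[OF assms(1)] by blast
  note mesh = assms(1) KC eps rat
  have distribution: "prob_space (limit_kernel k eps y) \<and> sets (limit_kernel k eps y) = sets borel"
    if "0 < y" for y
    using real_distribution_limit_kernel[OF mesh that]
    unfolding real_distribution_def real_distribution_axioms_def by blast
  show ?thesis
    by (intro exI[of _ eps] exI[of _ "limit_kernel k eps"] conjI allI impI)
      (simp_all add: eps distribution limit_kernel_support(1)[OF mesh]
        limit_kernel_symmetric[OF mesh] limit_kernel_mean[OF mesh]
        limit_kernel_weak_star_continuous[OF mesh] limit_kernel_weak_limit[OF mesh]
        limit_kernel_uniform_limit[OF mesh])
qed

end
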